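(* Let $G$ be a finite group and $T$ a $G$-Tambara functor. If $I=\sqrt{\langle x_1,\dots,x_m\rangle}$ and $J=\sqrt{\langle y_1,\dots,y_n\rangle}$ are radical finitely generated Tambara ideals of $T$, then $I\cap J$ is again a radical finitely generated Tambara ideal, i.e. of the form $\sqrt{\langle z_1,\dots,z_k\rangle}$ for finitely many elements $z_j$.
   Context: All rings are commutative with unit. A $G$-Tambara functor $T$ consists of commutative rings $T(G/H)$ for subgroups $H\le G$ with restriction ring maps, additive transfer maps, multiplicative norm maps and conjugation isomorphisms satisfying the standard Tambara axioms (Hill–Mazur). A Tambara ideal is a family of ring ideals $I(G/H)\subseteq T(G/H)$ closed under restriction, transfer, norm and conjugation; intersection is levelwise. $\langle z_1,\dots,z_k\rangle$ (with $z_j\in T(G/H_j)$) is the smallest Tambara ideal containing each $z_j$ at its level. The product $IJ$ is the Tambara ideal generated by levelwise products. The radical $\sqrt I$ has $\sqrt I(G/H)=\{x\mid \langle x\rangle^n\subseteq I\text{ for some }n\ge1\}$. *)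

theory Defs
  imports "HOL-Algebra.Algebra" "HOL-Library.FuncSet"
begin

definition conjset :: "('g,'m) monoid_scheme \<Rightarrow> 'g \<Rightarrow> 'g set \<Rightarrow> 'g set" where
  "conjset G g H = (\<lambda>h. g \<otimes>\<^bsub>G\<^esub> h \<otimes>\<^bsub>G\<^esub> inv\<^bsub>G\<^esub> g) ` H"

definition dcoset :: "('g,'m) monoid_scheme \<Rightarrow> 'g set \<Rightarrow> 'g \<Rightarrow> 'g set \<Rightarrow> 'g set" where
  "dcoset G K g L = {k \<otimes>\<^bsub>G\<^esub> g \<otimes>\<^bsub>G\<^esub> l | k l. k \<in> K \<and> l \<in> L}"

definition dcosets :: "('g,'m) monoid_scheme \<Rightarrow> 'g set \<Rightarrow> 'g set \<Rightarrow> 'g set \<Rightarrow> 'g set set" where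
  "dcosets G H K L = (\<lambda>g. dcoset G K g L) ` H"

definition lcos :: "('g,'m) monoid_scheme \<Rightarrow> 'g set \<Rightarrow> 'g set \<Rightarrow> 'g set set" where
  "lcos G H K = (\<lambda>h. (h <#\<^bsub>G\<^esub> K)) ` H"

definition crep :: "'x set \<Rightarrow> 'x" where
  "crep D = (SOME x. x \<in> D)"

text \<open>Functions H/K \<rightarrow> {a,b} (encoded as bool, True = a), with the H-action.\<close>
definition bfuns :: "('g,'m) monoid_scheme \<Rightarrow> 'g set \<Rightarrow> 'g set \<Rightarrow> ('g set \<Rightarrow> bool) set" where
  "bfuns G H K = lcos G H K \<rightarrow>\<^sub>E (UNIV :: bool set)"

definition bact :: "('g,'m) monoid_scheme \<Rightarrow> 'g set \<Rightarrow> 'g set \<Rightarrow> 'g \<Rightarrow> ('g set \<Rightarrow> bool) \<Rightarrow> ('g set \<Rightarrow> bool)" where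
  "bact G H K h f = (\<lambda>C\<in>lcos G H K. f (((inv\<^bsub>G\<^esub> h) <#\<^bsub>G\<^esub> C)))"

definition bstab :: "('g,'m) monoid_scheme \<Rightarrow> 'g set \<Rightarrow> 'g set \<Rightarrow> ('g set \<Rightarrow> bool) \<Rightarrow> 'g set" where
  "bstab G H K f = {h \<in> H. bact G H K h f = f}"

definition borbits :: "('g,'m) monoid_scheme \<Rightarrow> 'g set \<Rightarrow> 'g set \<Rightarrow> ('g set \<Rightarrow> bool) set set" where
  "borbits G H K = (\<lambda>f. (\<lambda>h. bact G H K h f) ` H) ` bfuns G H K"

text \<open>Sections of the H-map H/L \<rightarrow> H/K (for L \<le> K \<le> H), with the H-action.\<close>
definition secs :: "('g,'m) monoid_scheme \<Rightarrow> 'g set \<Rightarrow> 'g set \<Rightarrow> 'g set \<Rightarrow> ('g set \<Rightarrow> 'g set) set" where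
  "secs G H K L = {s \<in> lcos G H K \<rightarrow>\<^sub>E lcos G H L. \<forall>C\<in>lcos G H K. s C \<subseteq> C}"

definition sact :: "('g,'m) monoid_scheme \<Rightarrow> 'g set \<Rightarrow> 'g set \<Rightarrow> 'g \<Rightarrow> ('g set \<Rightarrow> 'g set) \<Rightarrow> ('g set \<Rightarrow> 'g set)" where
  "sact G H K h s = (\<lambda>C\<in>lcos G H K. (h <#\<^bsub>G\<^esub> (s ((inv\<^bsub>G\<^esub> h) <#\<^bsub>G\<^esub> C))))"

definition sstab :: "('g,'m) monoid_scheme \<Rightarrow> 'g set \<Rightarrow> 'g set \<Rightarrow> ('g set \<Rightarrow> 'g set) \<Rightarrow> 'g set" where
  "sstab G H K s = {h \<in> H. sact G H K h s = s}"

definition sorbits :: "('g,'m) monoid_scheme \<Rightarrow> 'g set \<Rightarrow> 'g set \<Rightarrow> 'g set \<Rightarrow> ('g set \<Rightarrow> 'g set) set set" where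
  "sorbits G H K L = (\<lambda>s. (\<lambda>h. sact G H K h s) ` H) ` secs G H K L"

section \<open>Tambara functor data (Hill--Mazur style, on orbits G/H)\<close>

text \<open>tT H = T(G/H); tres H K : T(G/H) \<rightarrow> T(G/K) restriction (K \<le> H);
  ttr K H, tnm K H : T(G/K) \<rightarrow> T(G/H) transfer and norm (K \<le> H);
  tcj g H : T(G/H) \<rightarrow> T(G/gHg^-1) conjugation.\<close>
record ('g,'a) tdata =
  tT   :: "'g set \<Rightarrow> 'a ring"
  tres :: "'g set \<Rightarrow> 'g set \<Rightarrow> 'a \<Rightarrow> 'a"
  ttr  :: "'g set \<Rightarrow> 'g set \<Rightarrow> 'a \<Rightarrow> 'a"
  tnm  :: "'g set \<Rightarrow> 'g set \<Rightarrow> 'a \<Rightarrow> 'a"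
  tcj  :: "'g \<Rightarrow> 'g set \<Rightarrow> 'a \<Rightarrow> 'a"

definition sub2 :: "('g,'m) monoid_scheme \<Rightarrow> 'g set \<Rightarrow> 'g set \<Rightarrow> bool" where
  "sub2 G K H \<longleftrightarrow> subgroup K G \<and> subgroup H G \<and> K \<subseteq> H"

definition tf_rings :: "('g,'m) monoid_scheme \<Rightarrow> ('g,'a) tdata \<Rightarrow> bool" where
  "tf_rings G F \<longleftrightarrow> (\<forall>H. subgroup H G \<longrightarrow> cring (tT F H))"

definition tf_res :: "('g,'m) monoid_scheme \<Rightarrow> ('g,'a) tdata \<Rightarrow> bool" where
  "tf_res G F \<longleftrightarrow>
     (\<forall>H K. sub2 G K H \<longrightarrow> tres F H K \<in> ring_hom (tT F H) (tT F K)) \<and>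
     (\<forall>H. subgroup H G \<longrightarrow> (\<forall>x\<in>carrier (tT F H). tres F H H x = x)) \<and>
     (\<forall>H K L. sub2 G K H \<longrightarrow> sub2 G L K \<longrightarrow>
        (\<forall>x\<in>carrier (tT F H). tres F K L (tres F H K x) = tres F H L x))"

definition tf_tr :: "('g,'m) monoid_scheme \<Rightarrow> ('g,'a) tdata \<Rightarrow> bool" where
  "tf_tr G F \<longleftrightarrow>
     (\<forall>H K. sub2 G K H \<longrightarrow> ttr F K H \<in> carrier (tT F K) \<rightarrow> carrier (tT F H) \<and>
        (\<forall>x\<in>carrier (tT F K). \<forall>y\<in>carrier (tT F K).
           ttr F K H (x \<oplus>\<^bsub>tT F K\<^esub> y) = ttr F K H x \<oplus>\<^bsub>tT F H\<^esub> ttr F K H y)) \<and>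
     (\<forall>H. subgroup H G \<longrightarrow> (\<forall>x\<in>carrier (tT F H). ttr F H H x = x)) \<and>
     (\<forall>H K L. sub2 G K H \<longrightarrow> sub2 G L K \<longrightarrow>
        (\<forall>x\<in>carrier (tT F L). ttr F K H (ttr F L K x) = ttr F L H x))"

definition tf_nm :: "('g,'m) monoid_scheme \<Rightarrow> ('g,'a) tdata \<Rightarrow> bool" where
  "tf_nm G F \<longleftrightarrow>
     (\<forall>H K. sub2 G K H \<longrightarrow> tnm F K H \<in> carrier (tT F K) \<rightarrow> carrier (tT F H) \<and>
        tnm F K H \<one>\<^bsub>tT F K\<^esub> = \<one>\<^bsub>tT F H\<^esub> \<and>
        (\<forall>x\<in>carrier (tT F K). \<forall>y\<in>carrier (tT F K).
           tnm F K H (x \<otimes>\<^bsub>tT F K\<^esub> y) = tnm F K H x \<otimes>\<^bsub>tT F H\<^esub> tnm F K H y)) \<and>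
     (\<forall>H. subgroup H G \<longrightarrow> (\<forall>x\<in>carrier (tT F H). tnm F H H x = x)) \<and>
     (\<forall>H K L. sub2 G K H \<longrightarrow> sub2 G L K \<longrightarrow>
        (\<forall>x\<in>carrier (tT F L). tnm F K H (tnm F L K x) = tnm F L H x))"

definition tf_cj :: "('g,'m) monoid_scheme \<Rightarrow> ('g,'a) tdata \<Rightarrow> bool" where
  "tf_cj G F \<longleftrightarrow>
     (\<forall>g H. g \<in> carrier G \<longrightarrow> subgroup H G \<longrightarrow>
        tcj F g H \<in> ring_hom (tT F H) (tT F (conjset G g H))) \<and>
     (\<forall>H. subgroup H G \<longrightarrow> (\<forall>x\<in>carrier (tT F H). tcj F \<one>\<^bsub>G\<^esub> H x = x)) \<and>
     (\<forall>g g' H. g \<in> carrier G \<longrightarrow> g' \<in> carrier G \<longrightarrow> subgroup H G \<longrightarrow>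
        (\<forall>x\<in>carrier (tT F H).
           tcj F (g \<otimes>\<^bsub>G\<^esub> g') H x = tcj F g (conjset G g' H) (tcj F g' H x))) \<and>
     (\<forall>h H. subgroup H G \<longrightarrow> h \<in> H \<longrightarrow> (\<forall>x\<in>carrier (tT F H). tcj F h H x = x))"

definition tf_cj_compat :: "('g,'m) monoid_scheme \<Rightarrow> ('g,'a) tdata \<Rightarrow> bool" where
  "tf_cj_compat G F \<longleftrightarrow>
     (\<forall>g H K. g \<in> carrier G \<longrightarrow> sub2 G K H \<longrightarrow>
        (\<forall>x\<in>carrier (tT F H). tcj F g K (tres F H K x)
            = tres F (conjset G g H) (conjset G g K) (tcj F g H x)) \<and>
        (\<forall>x\<in>carrier (tT F K). tcj F g H (ttr F K H x)
            = ttr F (conjset G g K) (conjset G g H) (tcj F g K x)) \<and>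
        (\<forall>x\<in>carrier (tT F K). tcj F g H (tnm F K H x)
            = tnm F (conjset G g K) (conjset G g H) (tcj F g K x)))"

definition tf_mackey :: "('g,'m) monoid_scheme \<Rightarrow> ('g,'a) tdata \<Rightarrow> bool" where
  "tf_mackey G F \<longleftrightarrow>
     (\<forall>H K L. sub2 G K H \<longrightarrow> sub2 G L H \<longrightarrow> (\<forall>a\<in>carrier (tT F L).
        tres F H K (ttr F L H a) =
          finsum (tT F K) (\<lambda>D. let g = crep D; M = K \<inter> conjset G g L in
             ttr F M K (tres F (conjset G g L) M (tcj F g L a))) (dcosets G H K L)
      \<and> tres F H K (tnm F L H a) =
          finprod (tT F K) (\<lambda>D. let g = crep D; M = K \<inter> conjset G g L in
             tnm F M K (tres F (conjset G g L) M (tcj F g L a))) (dcosets G H K L)))"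

definition tf_frob :: "('g,'m) monoid_scheme \<Rightarrow> ('g,'a) tdata \<Rightarrow> bool" where
  "tf_frob G F \<longleftrightarrow>
     (\<forall>H K. sub2 G K H \<longrightarrow> (\<forall>a\<in>carrier (tT F K). \<forall>b\<in>carrier (tT F H).
        ttr F K H (a \<otimes>\<^bsub>tT F K\<^esub> tres F H K b) = ttr F K H a \<otimes>\<^bsub>tT F H\<^esub> b))"

definition tf_recip_sum :: "('g,'m) monoid_scheme \<Rightarrow> ('g,'a) tdata \<Rightarrow> bool" where
  "tf_recip_sum G F \<longleftrightarrow>
     (\<forall>H K. sub2 G K H \<longrightarrow> (\<forall>a\<in>carrier (tT F K). \<forall>b\<in>carrier (tT F K).
        tnm F K H (a \<oplus>\<^bsub>tT F K\<^esub> b) =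
          finsum (tT F H) (\<lambda>Ob. let f = crep Ob; S = bstab G H K f in
            ttr F S H (finprod (tT F S) (\<lambda>D. let g = crep D; M = S \<inter> conjset G g K in
               tnm F M S (tres F (conjset G g K) M
                 (tcj F g K (if f ((g <#\<^bsub>G\<^esub> K)) then a else b)))) (dcosets G H S K)))
          (borbits G H K)))"

definition tf_recip_tr :: "('g,'m) monoid_scheme \<Rightarrow> ('g,'a) tdata \<Rightarrow> bool" where
  "tf_recip_tr G F \<longleftrightarrow>
     (\<forall>H K L. sub2 G K H \<longrightarrow> sub2 G L K \<longrightarrow> (\<forall>a\<in>carrier (tT F L).
        tnm F K H (ttr F L K a) =
          finsum (tT F H) (\<lambda>Ob. let s = crep Ob; S = sstab G H K s in
            ttr F S H (finprod (tT F S) (\<lambda>D. let g = crep D; g' = crep (s ((g <#\<^bsub>G\<^esub> K)));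
                  M = S \<inter> conjset G g' L in
               tnm F M S (tres F (conjset G g' L) M (tcj F g' L a))) (dcosets G H S K)))
          (sorbits G H K L)))"

definition tambara :: "('g,'m) monoid_scheme \<Rightarrow> ('g,'a) tdata \<Rightarrow> bool" where
  "tambara G F \<longleftrightarrow> group G \<and> finite (carrier G) \<and>
     tf_rings G F \<and> tf_res G F \<and> tf_tr G F \<and> tf_nm G F \<and> tf_cj G F \<and> tf_cj_compat G F \<and>
     tf_mackey G F \<and> tf_frob G F \<and> tf_recip_sum G F \<and> tf_recip_tr G F"

definition tideal :: "('g,'m) monoid_scheme \<Rightarrow> ('g,'a) tdata \<Rightarrow> ('g set \<Rightarrow> 'a set) \<Rightarrow> bool" where
  "tideal G F I \<longleftrightarrow>
     (\<forall>H. subgroup H G \<longrightarrow> ideal (I H) (tT F H)) \<and>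
     (\<forall>H K. sub2 G K H \<longrightarrow>
        tres F H K ` I H \<subseteq> I K \<and> ttr F K H ` I K \<subseteq> I H \<and> tnm F K H ` I K \<subseteq> I H) \<and>
     (\<forall>g H. g \<in> carrier G \<longrightarrow> subgroup H G \<longrightarrow> tcj F g H ` I H \<subseteq> I (conjset G g H))"

definition tgen :: "('g,'m) monoid_scheme \<Rightarrow> ('g,'a) tdata \<Rightarrow> ('g set \<times> 'a) set \<Rightarrow> ('g set \<Rightarrow> 'a set)" where
  "tgen G F S = (\<lambda>H. \<Inter> {I H | I. tideal G F I \<and> (\<forall>(K, z) \<in> S. z \<in> I K)})"

definition tprod :: "('g,'m) monoid_scheme \<Rightarrow> ('g,'a) tdata \<Rightarrow> ('g set \<Rightarrow> 'a set) \<Rightarrow> ('g set \<Rightarrow> 'a set) \<Rightarrow> ('g set \<Rightarrow> 'a set)" where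
  "tprod G F I J = tgen G F {(H, a \<otimes>\<^bsub>tT F H\<^esub> b) | H a b. subgroup H G \<and> a \<in> I H \<and> b \<in> J H}"

text \<open>Powers I^n for n \<ge> 1 (I^0 is taken to be the unit ideal; it is never used).\<close>
fun tpow :: "('g,'m) monoid_scheme \<Rightarrow> ('g,'a) tdata \<Rightarrow> ('g set \<Rightarrow> 'a set) \<Rightarrow> nat \<Rightarrow> ('g set \<Rightarrow> 'a set)" where
  "tpow G F I 0 = (\<lambda>H. carrier (tT F H))"
| "tpow G F I (Suc 0) = I"
| "tpow G F I (Suc (Suc n)) = tprod G F (tpow G F I (Suc n)) I"

definition tsubseteq :: "('g,'m) monoid_scheme \<Rightarrow> ('g set \<Rightarrow> 'a set) \<Rightarrow> ('g set \<Rightarrow> 'a set) \<Rightarrow> bool" where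
  "tsubseteq G I J \<longleftrightarrow> (\<forall>H. subgroup H G \<longrightarrow> I H \<subseteq> J H)"

definition trad :: "('g,'m) monoid_scheme \<Rightarrow> ('g,'a) tdata \<Rightarrow> ('g set \<Rightarrow> 'a set) \<Rightarrow> ('g set \<Rightarrow> 'a set)" where
  "trad G F I = (\<lambda>H. {x \<in> carrier (tT F H).
      \<exists>n\<ge>1. tsubseteq G (tpow G F (tgen G F {(H, x)}) n) I})"

end

theory Submission
  imports Defs
begin

text \<open>Let \<open>Z\<close> be generated by the products \<open>s t\<close>, where \<open>s\<close> and \<open>t\<close> range over the twisted
  norms \<open>N\<^sub>B\<^sup>M res\<^sub>B c\<^sub>g\<close> of the generators \<open>x\<^sub>i\<close> and \<open>y\<^sub>j\<close>; as \<open>G\<close> is finite there are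
  finitely many. Clearly \<open>Z \<subseteq> \<langle>x\<rangle> \<inter> \<langle>y\<rangle>\<close>, and \<open>\<langle>x\<rangle>\<langle>y\<rangle> \<subseteq> Z\<close> holds as well. Then
  \<open>\<surd>\<langle>x\<rangle> \<inter> \<surd>\<langle>y\<rangle> = \<surd>Z\<close>, since \<open>\<langle>w\<rangle>\<^bsup>n+m\<^esup> \<subseteq> \<langle>w\<rangle>\<^bsup>n\<^esup>\<langle>w\<rangle>\<^bsup>m\<^esup>\<close>.

  Both \<open>\<langle>x\<rangle>\<langle>y\<rangle> \<subseteq> Z\<close> and the associativity behind the last inclusion come from one
  construction: for a Tambara ideal \<open>Z\<close> and a family \<open>S\<close> whose restrictions are multiples of
  members of \<open>S\<close>, the elements \<open>u\<close> all of whose twisted norms are multiplied into \<open>Z\<close> by \<open>S\<close>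
  form a Tambara ideal \<open>(Z : S)\<close>. Closure under sums and transfers is where Tambara
  reciprocity enters; transfers need an induction on the order of the subgroup.\<close>

lemma crep_mem: "A \<noteq> {} \<Longrightarrow> crep A \<in> A"
  unfolding crep_def by (simp add: some_in_eq)

lemma (in cring) cring_idealI:
  assumes "I \<subseteq> carrier R" "\<zero> \<in> I"
    and "\<And>a b. a \<in> I \<Longrightarrow> b \<in> I \<Longrightarrow> a \<oplus> b \<in> I"
    and "\<And>a x. a \<in> I \<Longrightarrow> x \<in> carrier R \<Longrightarrow> x \<otimes> a \<in> I"
  shows "ideal I R"
proof -
  have "\<ominus> a \<in> I" if "a \<in> I" for a
  proof -
    have "\<ominus> a = (\<ominus> \<one>) \<otimes> a" using that assms(1) by (auto simp: l_minus)
    then show ?thesis using assms(4) that by simp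
  qed
  then have "subgroup I (add_monoid R)"
    using assms(1-3) by (intro subgroup.intro) (auto simp: a_inv_def[symmetric])
  then show ?thesis
    using assms(1,4) by (intro idealI[OF ring_axioms]) (auto simp: m_comm subset_iff)
qed

lemma (in cring) ideal_colon:
  assumes "ideal Z R" "s \<in> carrier R"
  shows "ideal {t \<in> carrier R. s \<otimes> t \<in> Z} R"
proof (rule cring_idealI)
  show "\<zero> \<in> {t \<in> carrier R. s \<otimes> t \<in> Z}"
    using assms additive_subgroup.zero_closed[OF ideal.axioms(1)] by simp
  show "a \<oplus> b \<in> {t \<in> carrier R. s \<otimes> t \<in> Z}"
    if "a \<in> {t \<in> carrier R. s \<otimes> t \<in> Z}" "b \<in> {t \<in> carrier R. s \<otimes> t \<in> Z}" for a b
    using that assms additive_subgroup.a_closed[OF ideal.axioms(1)[OF assms(1)]] by (simp add: r_distr)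
  show "x \<otimes> a \<in> {t \<in> carrier R. s \<otimes> t \<in> Z}"
    if "a \<in> {t \<in> carrier R. s \<otimes> t \<in> Z}" "x \<in> carrier R" for a x
    using that assms ideal.I_l_closed[OF assms(1), of "s \<otimes> a" x] by (simp add: m_lcomm)
qed auto

lemma (in ideal) finsum_mem:
  assumes "\<And>x. x \<in> A \<Longrightarrow> f x \<in> I"
  shows "finsum R f A \<in> I"
proof (cases "finite A")
  case True
  then show ?thesis using assms
  proof (induction A rule: finite_induct)
    case (insert a A)
    then have "finsum R f (insert a A) = f a \<oplus> finsum R f A"
      using Icarr by (intro finsum_insert) auto
    then show ?case using insert a_closed by simp
  qed simp
qed simp

lemma (in comm_monoid) finprod_remove:
  assumes "finite A" "a \<in> A" "f \<in> A \<rightarrow> carrier G"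
  shows "finprod G f A = finprod G f (A - {a}) \<otimes> f a"
proof -
  have "finprod G f (insert a (A - {a})) = f a \<otimes> finprod G f (A - {a})"
    using assms by (intro finprod_insert) auto
  moreover have "finprod G f (A - {a}) \<in> carrier G" "f a \<in> carrier G"
    using assms(2,3) by (auto intro: finprod_closed)
  ultimately show ?thesis using insert_Diff[OF assms(2)] m_comm by simp
qed

context group
begin

lemma conjset_subgroup:
  assumes g: "g \<in> carrier G" and H: "subgroup H G"
  shows "subgroup (conjset G g H) G"
proof -
  have "conjset G g H = inv (inv g) <# H #> inv g"
    using g unfolding conjset_def l_coset_def r_coset_def by auto
  then show ?thesis using subgroup_conjugation_is_surj1[OF inv_closed[OF g] H] by simp
qed

lemma conjset_mult:
  "g \<in> carrier G \<Longrightarrow> h \<in> carrier G \<Longrightarrow> H \<subseteq> carrier G \<Longrightarrow>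
   conjset G g (conjset G h H) = conjset G (g \<otimes> h) H"
  unfolding conjset_def image_image
  by (rule image_cong) (auto simp: m_assoc inv_mult_group subset_iff)

lemma conjset_one: "H \<subseteq> carrier G \<Longrightarrow> conjset G \<one> H = H"
  unfolding conjset_def by (auto simp: subset_iff)

lemma conjset_mono: "K \<subseteq> H \<Longrightarrow> conjset G g K \<subseteq> conjset G g H"
  unfolding conjset_def by auto

lemma conjset_member:
  assumes H: "subgroup H G" and g: "g \<in> H"
  shows "conjset G g H = H"
proof -
  have "conjset G g H = g <# H #> inv g"
    unfolding conjset_def l_coset_def r_coset_def by auto
  also have "\<dots> = H"
    using H g subgroup.mem_carrier[OF H g]
    by (simp add: coset_join3 coset_join2 subgroup.m_inv_closed)
  finally show ?thesis .
qed

lemma sub2_conjset: "g \<in> carrier G \<Longrightarrow> sub2 G K H \<Longrightarrow> sub2 G (conjset G g K) (conjset G g H)"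
  unfolding sub2_def using conjset_subgroup conjset_mono by blast

lemma sub2_Int_conjset:
  assumes "subgroup S G" "g \<in> carrier G" "subgroup B G"
  shows "sub2 G (S \<inter> conjset G g B) S" "sub2 G (S \<inter> conjset G g B) (conjset G g B)"
  using subgroups_Inter_pair[OF assms(1) conjset_subgroup[OF assms(2,3)]]
    assms conjset_subgroup by (auto simp: sub2_def)

lemma finite_dcosets:
  "finite (carrier G) \<Longrightarrow> H \<subseteq> carrier G \<Longrightarrow> finite (dcosets G H K L)"
  unfolding dcosets_def using finite_subset by blast

lemma dcosets_nonempty: "subgroup H G \<Longrightarrow> dcosets G H K L \<noteq> {}"
  unfolding dcosets_def using subgroup.one_closed by fastforce

lemma crep_dcosets_mem:
  assumes "sub2 G K H" "sub2 G L H" "D \<in> dcosets G H K L"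
  shows "crep D \<in> H"
proof -
  obtain g where g: "g \<in> H" "D = dcoset G K g L" using assms(3) by (auto simp: dcosets_def)
  have "g \<in> D"
    using g assms(1,2) subgroup.mem_carrier[of H G g] subgroup.one_closed[of K G]
      subgroup.one_closed[of L G]
    unfolding g(2) dcoset_def sub2_def by (intro CollectI exI[of _ \<one>]) auto
  then obtain k l where "k \<in> K" "l \<in> L" "crep D = k \<otimes> g \<otimes> l"
    using crep_mem[of D] unfolding g dcoset_def by blast
  then show ?thesis using g(1) assms(1,2) subgroup.m_closed unfolding sub2_def by (metis subsetD)
qed

lemma lcos_mult_closed:
  assumes "subgroup K G" "subgroup H G" "h \<in> H" "C \<in> lcos G H K"
  shows "h <# C \<in> lcos G H K"
proof -
  obtain k where k: "k \<in> H" "C = k <# K" using assms(4) unfolding lcos_def by blast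
  have "h <# C = (h \<otimes> k) <# K"
    unfolding k(2) using k(1) assms(3) subgroup.subset[OF assms(1)] subgroup.subset[OF assms(2)]
    by (intro lcos_m_assoc) auto
  then show ?thesis using subgroup.m_closed[OF assms(2,3) k(1)] unfolding lcos_def by blast
qed

lemma lcos_subset_carrier:
  "subgroup K G \<Longrightarrow> subgroup H G \<Longrightarrow> C \<in> lcos G H K \<Longrightarrow> C \<subseteq> carrier G"
  unfolding lcos_def using l_coset_subset_G[OF subgroup.subset] subgroup.subset by blast

lemma crep_lcos_mem:
  assumes "sub2 G L H" "C \<in> lcos G H L"
  shows "crep C \<in> H"
proof -
  obtain k where k: "k \<in> H" "C = k <# L" using assms(2) unfolding lcos_def by blast
  have "k \<otimes> \<one> \<in> C" using k assms(1) subgroup.one_closed unfolding l_coset_def sub2_def by blast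
  then obtain l where "l \<in> L" "crep C = k \<otimes> l"
    using crep_mem[of C] unfolding k(2) l_coset_def by blast
  then show ?thesis using k(1) assms(1) subgroup.m_closed unfolding sub2_def by (metis subsetD)
qed

lemma subgroup_stabilizer:
  assumes H: "subgroup H G" and one: "act \<one> x = x"
    and mult: "\<And>a b. a \<in> H \<Longrightarrow> b \<in> H \<Longrightarrow> act a (act b x) = act (a \<otimes> b) x"
  shows "subgroup {h \<in> H. act h x = x} G"
proof (rule subgroupI)
  show "{h \<in> H. act h x = x} \<subseteq> carrier G" using subgroup.subset[OF H] by blast
  show "{h \<in> H. act h x = x} \<noteq> {}" using one subgroup.one_closed[OF H] by blast
  show "inv a \<in> {h \<in> H. act h x = x}" if "a \<in> {h \<in> H. act h x = x}" for a
  proof -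
    have a: "a \<in> H" "act a x = x" using that by auto
    have "act (inv a) x = act (inv a \<otimes> a) x"
      using mult[OF subgroup.m_inv_closed[OF H a(1)] a(1)] a(2) by simp
    then show ?thesis using a one subgroup.m_inv_closed[OF H] subgroup.mem_carrier[OF H] by simp
  qed
  show "a \<otimes> b \<in> {h \<in> H. act h x = x}"
    if "a \<in> {h \<in> H. act h x = x}" "b \<in> {h \<in> H. act h x = x}" for a b
    using that mult[of a b] subgroup.m_closed[OF H] by auto
qed

lemma bact_mult:
  assumes "subgroup K G" "subgroup H G" "h1 \<in> H" "h2 \<in> H"
  shows "bact G H K h1 (bact G H K h2 f) = bact G H K (h1 \<otimes> h2) f"
proof
  fix C
  have h: "h1 \<in> carrier G" "h2 \<in> carrier G" using assms(2-4) subgroup.subset by auto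
  show "bact G H K h1 (bact G H K h2 f) C = bact G H K (h1 \<otimes> h2) f C"
  proof (cases "C \<in> lcos G H K")
    case True
    have "inv h2 <# (inv h1 <# C) = inv (h1 \<otimes> h2) <# C"
      using lcos_m_assoc[OF lcos_subset_carrier[OF assms(1,2) True], of "inv h2" "inv h1"] h
      by (simp add: inv_mult_group)
    then show ?thesis
      using True lcos_mult_closed[OF assms(1,2) subgroup.m_inv_closed[OF assms(2,3)] True]
      by (simp add: bact_def)
  qed (simp add: bact_def)
qed

lemma subgroup_bstab:
  assumes "subgroup K G" "subgroup H G" "f \<in> extensional (lcos G H K)"
  shows "subgroup (bstab G H K f) G"
  unfolding bstab_def
proof (rule subgroup_stabilizer[OF assms(2)])
  show "bact G H K \<one> f = f"
    using assms lcos_subset_carrier[OF assms(1,2)]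
    by (intro ext) (auto simp: bact_def lcos_mult_one extensional_def)
qed (rule bact_mult[OF assms(1,2)])

lemma borbits_crep_extensional:
  assumes "subgroup H G" "Ob \<in> borbits G H K"
  shows "crep Ob \<in> extensional (lcos G H K)"
proof -
  obtain f where Ob: "Ob = (\<lambda>h. bact G H K h f) ` H" using assms(2) unfolding borbits_def by blast
  then have "crep Ob \<in> (\<lambda>h. bact G H K h f) ` H"
    using crep_mem[of Ob] subgroup.one_closed[OF assms(1)] by blast
  then show ?thesis by (auto simp: bact_def)
qed

lemma sact_funcset:
  assumes "subgroup K G" "subgroup H G" "h \<in> H" "subgroup L G"
    and "s \<in> lcos G H K \<rightarrow>\<^sub>E lcos G H L"
  shows "sact G H K h s \<in> lcos G H K \<rightarrow>\<^sub>E lcos G H L"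
proof -
  have "h <# s (inv h <# C) \<in> lcos G H L" if "C \<in> lcos G H K" for C
  proof -
    have "inv h <# C \<in> lcos G H K"
      using lcos_mult_closed[OF assms(1,2) subgroup.m_inv_closed[OF assms(2,3)] that] .
    then have "s (inv h <# C) \<in> lcos G H L" using assms(5) by blast
    then show ?thesis by (rule lcos_mult_closed[OF assms(4,2,3)])
  qed
  then show ?thesis unfolding sact_def by auto
qed

lemma sact_mult:
  assumes "subgroup K G" "subgroup H G" "subgroup L G" "h1 \<in> H" "h2 \<in> H"
    and s: "s \<in> lcos G H K \<rightarrow>\<^sub>E lcos G H L"
  shows "sact G H K h1 (sact G H K h2 s) = sact G H K (h1 \<otimes> h2) s"
proof
  fix C
  have h: "h1 \<in> carrier G" "h2 \<in> carrier G" using assms(2,4,5) subgroup.subset by auto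
  show "sact G H K h1 (sact G H K h2 s) C = sact G H K (h1 \<otimes> h2) s C"
  proof (cases "C \<in> lcos G H K")
    case True
    have C1: "inv h1 <# C \<in> lcos G H K"
      using lcos_mult_closed[OF assms(1,2) subgroup.m_inv_closed[OF assms(2,4)] True] .
    have C2: "inv h2 <# (inv h1 <# C) = inv (h1 \<otimes> h2) <# C"
      using lcos_m_assoc[OF lcos_subset_carrier[OF assms(1,2) True], of "inv h2" "inv h1"] h
      by (simp add: inv_mult_group)
    have X: "s (inv (h1 \<otimes> h2) <# C) \<subseteq> carrier G"
      using s lcos_mult_closed[OF assms(1,2) subgroup.m_inv_closed[OF assms(2,5)] C1]
        lcos_subset_carrier[OF assms(3,2)] C2 by auto
    have "sact G H K h1 (sact G H K h2 s) C = h1 <# (h2 <# s (inv h2 <# (inv h1 <# C)))"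
      using True C1 unfolding sact_def restrict_apply by simp
    also have "\<dots> = h1 <# (h2 <# s (inv (h1 \<otimes> h2) <# C))"
      unfolding C2 ..
    also have "\<dots> = sact G H K (h1 \<otimes> h2) s C"
      using True lcos_m_assoc[OF X h] unfolding sact_def restrict_apply by simp
    finally show ?thesis .
  qed (simp add: sact_def)
qed

lemma subgroup_sstab:
  assumes "subgroup K G" "subgroup H G" "subgroup L G"
    and s: "s \<in> lcos G H K \<rightarrow>\<^sub>E lcos G H L"
  shows "subgroup (sstab G H K s) G"
  unfolding sstab_def
proof (rule subgroup_stabilizer[OF assms(2)])
  have "sact G H K \<one> s C = s C" for C
  proof (cases "C \<in> lcos G H K")
    case True
    then have "C \<subseteq> carrier G" "s C \<subseteq> carrier G"
      using s lcos_subset_carrier[OF assms(1,2)] lcos_subset_carrier[OF assms(3,2)] by blast+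
    then show ?thesis using True by (simp add: sact_def lcos_mult_one)
  next
    case False
    then show ?thesis using s by (simp add: sact_def PiE_def extensional_def)
  qed
  then show "sact G H K \<one> s = s" ..
qed (rule sact_mult[OF assms(1-3) _ _ s])

lemma sorbits_crep_funcset:
  assumes "subgroup K G" "subgroup H G" "subgroup L G" "Ob \<in> sorbits G H K L"
  shows "crep Ob \<in> lcos G H K \<rightarrow>\<^sub>E lcos G H L"
proof -
  obtain s where s: "s \<in> secs G H K L" "Ob = (\<lambda>h. sact G H K h s) ` H"
    using assms(4) unfolding sorbits_def by blast
  then obtain h where "h \<in> H" "crep Ob = sact G H K h s"
    using crep_mem[of Ob] subgroup.one_closed[OF assms(2)] by blast
  moreover have "s \<in> lcos G H K \<rightarrow>\<^sub>E lcos G H L" using s(1) unfolding secs_def by simp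
  ultimately show ?thesis using sact_funcset[OF assms(1,2) _ assms(3)] by simp
qed

end

section \<open>Tambara functors\<close>

locale tambara_functor =
  fixes G :: "('g,'m) monoid_scheme" (structure) and F :: "('g,'a) tdata"
  assumes tambara: "tambara G F"
begin

sublocale group G
  using tambara unfolding tambara_def by (rule conjunct1)

lemma finite_carrier: "finite (carrier G)"
  and tambara_axioms: "tf_rings G F" "tf_res G F" "tf_tr G F" "tf_nm G F" "tf_cj G F" "tf_cj_compat G F"
    "tf_mackey G F" "tf_frob G F" "tf_recip_sum G F" "tf_recip_tr G F"
  using tambara unfolding tambara_def by blast+

lemma cring_level: "subgroup H G \<Longrightarrow> cring (tT F H)"
  using tambara_axioms(1) unfolding tf_rings_def by blast

lemma res_ring_hom: "sub2 G K H \<Longrightarrow> tres F H K \<in> ring_hom (tT F H) (tT F K)"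
  using tambara_axioms(2) unfolding tf_res_def by blast

lemma res_self: "subgroup H G \<Longrightarrow> x \<in> carrier (tT F H) \<Longrightarrow> tres F H H x = x"
  using tambara_axioms(2) unfolding tf_res_def by blast

lemma res_res:
  "sub2 G K H \<Longrightarrow> sub2 G L K \<Longrightarrow> x \<in> carrier (tT F H) \<Longrightarrow> tres F K L (tres F H K x) = tres F H L x"
  using tambara_axioms(2) unfolding tf_res_def by blast

lemma tr_closed: "sub2 G K H \<Longrightarrow> x \<in> carrier (tT F K) \<Longrightarrow> ttr F K H x \<in> carrier (tT F H)"
  using tambara_axioms(3) unfolding tf_tr_def Pi_iff by simp

lemma nm_closed: "sub2 G K H \<Longrightarrow> x \<in> carrier (tT F K) \<Longrightarrow> tnm F K H x \<in> carrier (tT F H)"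
  using tambara_axioms(4) unfolding tf_nm_def Pi_iff by simp

lemma nm_mult:
  "sub2 G K H \<Longrightarrow> x \<in> carrier (tT F K) \<Longrightarrow> y \<in> carrier (tT F K) \<Longrightarrow>
   tnm F K H (x \<otimes>\<^bsub>tT F K\<^esub> y) = tnm F K H x \<otimes>\<^bsub>tT F H\<^esub> tnm F K H y"
  using tambara_axioms(4) unfolding tf_nm_def by blast

lemma nm_self: "subgroup H G \<Longrightarrow> x \<in> carrier (tT F H) \<Longrightarrow> tnm F H H x = x"
  using tambara_axioms(4) unfolding tf_nm_def by blast

lemma nm_nm:
  "sub2 G K H \<Longrightarrow> sub2 G L K \<Longrightarrow> x \<in> carrier (tT F L) \<Longrightarrow> tnm F K H (tnm F L K x) = tnm F L H x"
  using tambara_axioms(4) unfolding tf_nm_def by blast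

lemma cj_ring_hom:
  "g \<in> carrier G \<Longrightarrow> subgroup H G \<Longrightarrow> tcj F g H \<in> ring_hom (tT F H) (tT F (conjset G g H))"
  using tambara_axioms(5) unfolding tf_cj_def by simp

lemma cj_cj:
  "g \<in> carrier G \<Longrightarrow> g' \<in> carrier G \<Longrightarrow> subgroup H G \<Longrightarrow> x \<in> carrier (tT F H) \<Longrightarrow>
   tcj F g (conjset G g' H) (tcj F g' H x) = tcj F (g \<otimes> g') H x"
  using tambara_axioms(5) unfolding tf_cj_def by simp

lemma cj_member: "subgroup H G \<Longrightarrow> h \<in> H \<Longrightarrow> x \<in> carrier (tT F H) \<Longrightarrow> tcj F h H x = x"
  using tambara_axioms(5) unfolding tf_cj_def by blast

lemma cj_res:
  "g \<in> carrier G \<Longrightarrow> sub2 G K H \<Longrightarrow> x \<in> carrier (tT F H) \<Longrightarrow>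
   tcj F g K (tres F H K x) = tres F (conjset G g H) (conjset G g K) (tcj F g H x)"
  using tambara_axioms(6) unfolding tf_cj_compat_def by blast

lemma cj_tr:
  "g \<in> carrier G \<Longrightarrow> sub2 G K H \<Longrightarrow> x \<in> carrier (tT F K) \<Longrightarrow>
   tcj F g H (ttr F K H x) = ttr F (conjset G g K) (conjset G g H) (tcj F g K x)"
  using tambara_axioms(6) unfolding tf_cj_compat_def by blast

lemma cj_nm:
  "g \<in> carrier G \<Longrightarrow> sub2 G K H \<Longrightarrow> x \<in> carrier (tT F K) \<Longrightarrow>
   tcj F g H (tnm F K H x) = tnm F (conjset G g K) (conjset G g H) (tcj F g K x)"
  using tambara_axioms(6) unfolding tf_cj_compat_def by blast

lemma tr_frobenius:
  "sub2 G K H \<Longrightarrow> a \<in> carrier (tT F K) \<Longrightarrow> b \<in> carrier (tT F H) \<Longrightarrow>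
   ttr F K H (a \<otimes>\<^bsub>tT F K\<^esub> tres F H K b) = ttr F K H a \<otimes>\<^bsub>tT F H\<^esub> b"
  using tambara_axioms(8) unfolding tf_frob_def by blast

lemma res_closed: "sub2 G K H \<Longrightarrow> x \<in> carrier (tT F H) \<Longrightarrow> tres F H K x \<in> carrier (tT F K)"
  by (rule ring_hom_closed[OF res_ring_hom])

lemma res_mult:
  "sub2 G K H \<Longrightarrow> x \<in> carrier (tT F H) \<Longrightarrow> y \<in> carrier (tT F H) \<Longrightarrow>
   tres F H K (x \<otimes>\<^bsub>tT F H\<^esub> y) = tres F H K x \<otimes>\<^bsub>tT F K\<^esub> tres F H K y"
  by (rule ring_hom_mult[OF res_ring_hom])

lemma res_add:
  "sub2 G K H \<Longrightarrow> x \<in> carrier (tT F H) \<Longrightarrow> y \<in> carrier (tT F H) \<Longrightarrow>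
   tres F H K (x \<oplus>\<^bsub>tT F H\<^esub> y) = tres F H K x \<oplus>\<^bsub>tT F K\<^esub> tres F H K y"
  by (rule ring_hom_add[OF res_ring_hom])

lemma res_zero: "sub2 G K H \<Longrightarrow> tres F H K \<zero>\<^bsub>tT F H\<^esub> = \<zero>\<^bsub>tT F K\<^esub>"
  by (rule ring_hom_zero[OF res_ring_hom]) (auto simp: sub2_def intro: cring.axioms(1) cring_level)

lemma cj_closed:
  "g \<in> carrier G \<Longrightarrow> subgroup H G \<Longrightarrow> x \<in> carrier (tT F H) \<Longrightarrow> tcj F g H x \<in> carrier (tT F (conjset G g H))"
  by (rule ring_hom_closed[OF cj_ring_hom])

lemma cj_mult:
  "g \<in> carrier G \<Longrightarrow> subgroup H G \<Longrightarrow> x \<in> carrier (tT F H) \<Longrightarrow> y \<in> carrier (tT F H) \<Longrightarrow>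
   tcj F g H (x \<otimes>\<^bsub>tT F H\<^esub> y) = tcj F g H x \<otimes>\<^bsub>tT F (conjset G g H)\<^esub> tcj F g H y"
  by (rule ring_hom_mult[OF cj_ring_hom])

lemma cj_add:
  "g \<in> carrier G \<Longrightarrow> subgroup H G \<Longrightarrow> x \<in> carrier (tT F H) \<Longrightarrow> y \<in> carrier (tT F H) \<Longrightarrow>
   tcj F g H (x \<oplus>\<^bsub>tT F H\<^esub> y) = tcj F g H x \<oplus>\<^bsub>tT F (conjset G g H)\<^esub> tcj F g H y"
  by (rule ring_hom_add[OF cj_ring_hom])

lemma cj_zero: "g \<in> carrier G \<Longrightarrow> subgroup H G \<Longrightarrow> tcj F g H \<zero>\<^bsub>tT F H\<^esub> = \<zero>\<^bsub>tT F (conjset G g H)\<^esub>"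
  by (rule ring_hom_zero[OF cj_ring_hom]) (auto intro: cring.axioms(1) cring_level conjset_subgroup)

text \<open>The twisted norm \<open>N\<^sub>B\<^sup>M res\<^sub>B c\<^sub>g u\<close> of \<open>u \<in> T(G/L)\<close>, meaningful for \<open>B \<le> M\<close> and
  \<open>B \<le> gLg\<^sup>-\<^sup>1\<close>. The Mackey and reciprocity formulas are sums of transfers of products of these.\<close>

definition norm_res_conj :: "'g set \<Rightarrow> 'g set \<Rightarrow> 'g \<Rightarrow> 'g set \<Rightarrow> 'a \<Rightarrow> 'a" where
  "norm_res_conj M B g L u = tnm F B M (tres F (conjset G g L) B (tcj F g L u))"

lemma res_tr_mackey:
  "sub2 G K H \<Longrightarrow> sub2 G L H \<Longrightarrow> a \<in> carrier (tT F L) \<Longrightarrow>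
   tres F H K (ttr F L H a) =
     finsum (tT F K) (\<lambda>D. let g = crep D; M = K \<inter> conjset G g L in
       ttr F M K (tres F (conjset G g L) M (tcj F g L a))) (dcosets G H K L)"
  using tambara_axioms(7) unfolding tf_mackey_def by blast

lemma res_nm_mackey:
  "sub2 G K H \<Longrightarrow> sub2 G L H \<Longrightarrow> a \<in> carrier (tT F L) \<Longrightarrow>
   tres F H K (tnm F L H a) =
     finprod (tT F K) (\<lambda>D. norm_res_conj K (K \<inter> conjset G (crep D) L) (crep D) L a) (dcosets G H K L)"
  using tambara_axioms(7) unfolding tf_mackey_def norm_res_conj_def Let_def by blast

lemma nm_add_reciprocity:
  "sub2 G K H \<Longrightarrow> a \<in> carrier (tT F K) \<Longrightarrow> b \<in> carrier (tT F K) \<Longrightarrow>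
   tnm F K H (a \<oplus>\<^bsub>tT F K\<^esub> b) =
     finsum (tT F H) (\<lambda>Ob. let S = bstab G H K (crep Ob) in
       ttr F S H (finprod (tT F S) (\<lambda>D. norm_res_conj S (S \<inter> conjset G (crep D) K) (crep D) K
         (if crep Ob (crep D <# K) then a else b)) (dcosets G H S K))) (borbits G H K)"
  using tambara_axioms(9) unfolding tf_recip_sum_def norm_res_conj_def Let_def by blast

lemma nm_tr_reciprocity:
  "sub2 G K H \<Longrightarrow> sub2 G L K \<Longrightarrow> a \<in> carrier (tT F L) \<Longrightarrow>
   tnm F K H (ttr F L K a) =
     finsum (tT F H) (\<lambda>Ob. let S = sstab G H K (crep Ob) in
       ttr F S H (finprod (tT F S) (\<lambda>D. let g = crep (crep Ob (crep D <# K)) in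
         norm_res_conj S (S \<inter> conjset G g L) g L a) (dcosets G H S K))) (sorbits G H K L)"
  using tambara_axioms(10) unfolding tf_recip_tr_def norm_res_conj_def Let_def by blast

lemma sub2_conjset_of_subset:
  "g \<in> carrier G \<Longrightarrow> subgroup L G \<Longrightarrow> sub2 G B M \<Longrightarrow> B \<subseteq> conjset G g L \<Longrightarrow> sub2 G B (conjset G g L)"
  using conjset_subgroup by (auto simp: sub2_def)

lemma norm_res_conj_closed:
  assumes "g \<in> carrier G" "sub2 G B M" "B \<subseteq> conjset G g L" "subgroup L G" "u \<in> carrier (tT F L)"
  shows "norm_res_conj M B g L u \<in> carrier (tT F M)"
  unfolding norm_res_conj_def using assms sub2_conjset_of_subset[OF assms(1,4,2,3)]
  by (intro nm_closed res_closed cj_closed)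

lemma norm_res_conj_mult:
  assumes "g \<in> carrier G" "sub2 G B M" "B \<subseteq> conjset G g L" "subgroup L G"
    and "u \<in> carrier (tT F L)" "v \<in> carrier (tT F L)"
  shows "norm_res_conj M B g L (u \<otimes>\<^bsub>tT F L\<^esub> v) =
    norm_res_conj M B g L u \<otimes>\<^bsub>tT F M\<^esub> norm_res_conj M B g L v"
  unfolding norm_res_conj_def using assms sub2_conjset_of_subset[OF assms(1,4,2,3)]
  by (simp add: cj_mult res_mult nm_mult cj_closed res_closed)

lemma norm_res_conj_res:
  assumes "g \<in> carrier G" "sub2 G K L" "B \<subseteq> conjset G g K" "sub2 G B M" "u \<in> carrier (tT F L)"
  shows "norm_res_conj M B g K (tres F L K u) = norm_res_conj M B g L u"
proof -
  have K: "subgroup K G" and L: "subgroup L G" using assms(2) by (auto simp: sub2_def)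
  have "sub2 G B (conjset G g K)" using sub2_conjset_of_subset[OF assms(1) K assms(4,3)] .
  then show ?thesis
    unfolding norm_res_conj_def cj_res[OF assms(1,2,5)]
    using res_res[OF sub2_conjset[OF assms(1,2)] _ cj_closed[OF assms(1) L assms(5)]] by simp
qed

lemma norm_res_conj_cj:
  assumes "g \<in> carrier G" "h \<in> carrier G" "subgroup L G" "u \<in> carrier (tT F L)"
  shows "norm_res_conj M B g (conjset G h L) (tcj F h L u) = norm_res_conj M B (g \<otimes> h) L u"
  unfolding norm_res_conj_def using assms
  by (simp add: cj_cj conjset_mult subgroup.subset)

lemma norm_res_conj_one:
  assumes "subgroup L G" "u \<in> carrier (tT F L)"
  shows "norm_res_conj L L \<one> L u = u"
  unfolding norm_res_conj_def
  using assms conjset_one[OF subgroup.subset[OF assms(1)]] subgroup.one_closed[OF assms(1)]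
  by (simp add: cj_member res_self nm_self)

lemma norm_res_conj_member:
  assumes "g \<in> M" "sub2 G B M" "t \<in> carrier (tT F B)"
  shows "norm_res_conj M (M \<inter> conjset G g B) g B t = tnm F B M t"
proof -
  have M: "subgroup M G" and B: "subgroup B G" using assms(2) by (auto simp: sub2_def)
  have g: "g \<in> carrier G" using subgroup.mem_carrier[OF M assms(1)] .
  have gM: "conjset G g M = M" using conjset_member[OF M assms(1)] .
  then have MgB: "M \<inter> conjset G g B = conjset G g B"
    using conjset_mono[of B M g] assms(2) by (auto simp: sub2_def)
  have "tnm F (conjset G g B) M (tcj F g B t) = tcj F g M (tnm F B M t)"
    using cj_nm[OF g assms(2,3)] gM by simp
  also have "\<dots> = tnm F B M t" using cj_member[OF M assms(1) nm_closed[OF assms(2,3)]] .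
  finally show ?thesis
    unfolding norm_res_conj_def MgB
    using res_self[OF conjset_subgroup[OF g B] cj_closed[OF g B assms(3)]] by simp
qed

lemma nm_norm_res_conj:
  assumes "sub2 G B M" "g \<in> carrier G" "sub2 G B' B" "B' \<subseteq> conjset G g L" "subgroup L G"
    and "u \<in> carrier (tT F L)"
  shows "tnm F B M (norm_res_conj B B' g L u) = norm_res_conj M B' g L u"
  unfolding norm_res_conj_def using assms sub2_conjset_of_subset[OF assms(2,5,3,4)]
  by (simp add: nm_nm res_closed cj_closed)

section \<open>Tambara ideals\<close>

lemma tideal_ideal: "tideal G F I \<Longrightarrow> subgroup H G \<Longrightarrow> ideal (I H) (tT F H)"
  by (simp add: tideal_def)

lemma tideal_closed: "tideal G F I \<Longrightarrow> subgroup H G \<Longrightarrow> x \<in> I H \<Longrightarrow> x \<in> carrier (tT F H)"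
  using ideal.Icarr[OF tideal_ideal] .

lemma tideal_res: "tideal G F I \<Longrightarrow> sub2 G K H \<Longrightarrow> x \<in> I H \<Longrightarrow> tres F H K x \<in> I K"
  by (simp add: tideal_def image_subset_iff)

lemma tideal_tr: "tideal G F I \<Longrightarrow> sub2 G K H \<Longrightarrow> x \<in> I K \<Longrightarrow> ttr F K H x \<in> I H"
  by (simp add: tideal_def image_subset_iff)

lemma tideal_nm: "tideal G F I \<Longrightarrow> sub2 G K H \<Longrightarrow> x \<in> I K \<Longrightarrow> tnm F K H x \<in> I H"
  by (simp add: tideal_def image_subset_iff)

lemma tideal_cj:
  "tideal G F I \<Longrightarrow> g \<in> carrier G \<Longrightarrow> subgroup H G \<Longrightarrow> x \<in> I H \<Longrightarrow> tcj F g H x \<in> I (conjset G g H)"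
  by (simp add: tideal_def image_subset_iff)

lemma tideal_norm_res_conj:
  assumes "tideal G F I" "g \<in> carrier G" "sub2 G B M" "B \<subseteq> conjset G g L" "subgroup L G" "u \<in> I L"
  shows "norm_res_conj M B g L u \<in> I M"
  unfolding norm_res_conj_def using assms sub2_conjset_of_subset[OF assms(2,5,3,4)]
  by (intro tideal_nm tideal_res tideal_cj)

lemma tideal_mult_left:
  "tideal G F I \<Longrightarrow> subgroup H G \<Longrightarrow> a \<in> I H \<Longrightarrow> x \<in> carrier (tT F H) \<Longrightarrow> x \<otimes>\<^bsub>tT F H\<^esub> a \<in> I H"
  using ideal.I_l_closed[OF tideal_ideal] .

lemma tideal_mult_right:
  "tideal G F I \<Longrightarrow> subgroup H G \<Longrightarrow> a \<in> I H \<Longrightarrow> x \<in> carrier (tT F H) \<Longrightarrow> a \<otimes>\<^bsub>tT F H\<^esub> x \<in> I H"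
  using ideal.I_r_closed[OF tideal_ideal] .

lemma tideal_top: "tideal G F (\<lambda>H. carrier (tT F H))"
  unfolding tideal_def
  using cring_level res_closed tr_closed nm_closed cj_closed
  by (auto simp: cring.axioms(1) ring.oneideal)

definition valid_gens :: "('g set \<times> 'a) set \<Rightarrow> bool" where
  "valid_gens S \<longleftrightarrow> (\<forall>(K, z) \<in> S. subgroup K G \<and> z \<in> carrier (tT F K))"

lemma tideal_tgen:
  assumes "valid_gens S"
  shows "tideal G F (tgen G F S)"
proof -
  define Fam where "Fam = {I. tideal G F I \<and> (\<forall>(K, z) \<in> S. z \<in> I K)}"
  have top: "(\<lambda>H. carrier (tT F H)) \<in> Fam"
    using tideal_top assms unfolding valid_gens_def Fam_def by auto
  have tgen: "tgen G F S H = (\<Inter>I\<in>Fam. I H)" for H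
    unfolding tgen_def Fam_def by auto
  have Fam: "tideal G F I" if "I \<in> Fam" for I using that unfolding Fam_def by simp
  have image_INT: "f ` (\<Inter>I\<in>Fam. I H) \<subseteq> (\<Inter>I\<in>Fam. I K)"
    if "\<And>I. I \<in> Fam \<Longrightarrow> f ` I H \<subseteq> I K" for f :: "'a \<Rightarrow> 'a" and H K
    using that by blast
  show ?thesis
    unfolding tideal_def tgen
  proof (intro conjI allI impI)
    fix H assume H: "subgroup H G"
    show "ideal (\<Inter>I\<in>Fam. I H) (tT F H)"
      using cring.axioms(1)[OF cring_level[OF H]] top Fam tideal_ideal[OF _ H]
      by (auto intro: ring.i_Intersect)
  next
    fix H K assume "sub2 G K H"
    then show "tres F H K ` (\<Inter>I\<in>Fam. I H) \<subseteq> (\<Inter>I\<in>Fam. I K)"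
      and "ttr F K H ` (\<Inter>I\<in>Fam. I K) \<subseteq> (\<Inter>I\<in>Fam. I H)"
      and "tnm F K H ` (\<Inter>I\<in>Fam. I K) \<subseteq> (\<Inter>I\<in>Fam. I H)"
      using Fam tideal_res tideal_tr tideal_nm by (auto intro!: image_INT)
  next
    fix g H assume "g \<in> carrier G" "subgroup H G"
    then show "tcj F g H ` (\<Inter>I\<in>Fam. I H) \<subseteq> (\<Inter>I\<in>Fam. I (conjset G g H))"
      using Fam tideal_cj by (auto intro!: image_INT)
  qed
qed

lemma tgen_mem: "(K, z) \<in> S \<Longrightarrow> z \<in> tgen G F S K"
  unfolding tgen_def by auto

lemma tgen_least:
  assumes "tideal G F I" "\<And>K z. (K, z) \<in> S \<Longrightarrow> z \<in> I K"
  shows "tgen G F S H \<subseteq> I H"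
  unfolding tgen_def using assms by blast

lemma tgen_mono: "S \<subseteq> S' \<Longrightarrow> tgen G F S H \<subseteq> tgen G F S' H"
  unfolding tgen_def by blast

lemma res_norm_res_conj_factor:
  assumes KM: "sub2 G K M" and g: "g \<in> carrier G" and BM: "sub2 G B M" and BL: "B \<subseteq> conjset G g L"
    and L: "subgroup L G" and u: "u \<in> carrier (tT F L)"
  shows "\<exists>r \<in> carrier (tT F K). \<exists>g' B'. g' \<in> carrier G \<and> sub2 G B' K \<and> B' \<subseteq> conjset G g' L \<and>
    tres F M K (norm_res_conj M B g L u) = r \<otimes>\<^bsub>tT F K\<^esub> norm_res_conj K B' g' L u"
proof -
  have K: "subgroup K G" and M: "subgroup M G" and B: "subgroup B G" using KM BM by (auto simp: sub2_def)
  define v where "v = tres F (conjset G g L) B (tcj F g L u)"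
  have v: "v \<in> carrier (tT F B)"
    unfolding v_def using sub2_conjset_of_subset[OF g L BM BL] g L u by (intro res_closed cj_closed)
  define A where "A = dcosets G M K B"
  define f where "f D = norm_res_conj K (K \<inter> conjset G (crep D) B) (crep D) B v" for D
  have A: "finite A" "A \<noteq> {}"
    unfolding A_def using finite_dcosets[OF finite_carrier subgroup.subset[OF M]] dcosets_nonempty[OF M] .
  obtain D where D: "D \<in> A" using A(2) by blast
  have h: "crep D' \<in> carrier G" if "D' \<in> A" for D'
    using crep_dcosets_mem[OF KM BM that[unfolded A_def]] subgroup.mem_carrier[OF M] by blast
  have f: "f \<in> A \<rightarrow> carrier (tT F K)"
  proof
    fix D' assume "D' \<in> A"
    then show "f D' \<in> carrier (tT F K)"
      unfolding f_def using sub2_Int_conjset[OF K h B] h v B by (intro norm_res_conj_closed) auto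
  qed
  interpret K: cring "tT F K" using cring_level[OF K] .
  have "tres F M K (norm_res_conj M B g L u) = finprod (tT F K) f A"
    unfolding norm_res_conj_def v_def[symmetric] res_nm_mackey[OF KM BM v] f_def A_def ..
  also have "\<dots> = finprod (tT F K) f (A - {D}) \<otimes>\<^bsub>tT F K\<^esub> f D"
    using K.finprod_remove[OF A(1) D f] .
  also have "f D = norm_res_conj K (K \<inter> conjset G (crep D) B) (crep D \<otimes> g) L u"
    unfolding f_def v_def
    using norm_res_conj_res[OF h[OF D] sub2_conjset_of_subset[OF g L BM BL] _ sub2_Int_conjset(1)[OF K h[OF D] B] cj_closed[OF g L u]]
      norm_res_conj_cj[OF h[OF D] g L u] by simp
  finally have "tres F M K (norm_res_conj M B g L u) = finprod (tT F K) f (A - {D}) \<otimes>\<^bsub>tT F K\<^esub>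
      norm_res_conj K (K \<inter> conjset G (crep D) B) (crep D \<otimes> g) L u" .
  moreover have "K \<inter> conjset G (crep D) B \<subseteq> conjset G (crep D \<otimes> g) L"
    using conjset_mono[OF BL, of "crep D"] conjset_mult[OF h[OF D] g subgroup.subset[OF L]] by blast
  moreover have "finprod (tT F K) f (A - {D}) \<in> carrier (tT F K)" using f by (intro K.finprod_closed) auto
  ultimately show ?thesis
    using sub2_Int_conjset(1)[OF K h[OF D] B] h[OF D] g by blast
qed

lemma norm_res_conj_nm_factor:
  assumes KL: "sub2 G K L" and g: "g \<in> carrier G" and BM: "sub2 G B M" and BL: "B \<subseteq> conjset G g L"
    and u: "u \<in> carrier (tT F K)"
  shows "\<exists>r \<in> carrier (tT F M). \<exists>g' B'. g' \<in> carrier G \<and> sub2 G B' M \<and> B' \<subseteq> conjset G g' K \<and>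
    norm_res_conj M B g L (tnm F K L u) = r \<otimes>\<^bsub>tT F M\<^esub> norm_res_conj M B' g' K u"
proof -
  have K: "subgroup K G" and L: "subgroup L G" and B: "subgroup B G" and M: "subgroup M G"
    using KL BM by (auto simp: sub2_def)
  define K' where "K' = conjset G g K"
  define L' where "L' = conjset G g L"
  define w where "w = tcj F g K u"
  have K'L': "sub2 G K' L'" unfolding K'_def L'_def using sub2_conjset[OF g KL] .
  have K': "subgroup K' G" using K'L' by (simp add: sub2_def)
  have BL': "sub2 G B L'" unfolding L'_def using sub2_conjset_of_subset[OF g L BM BL] .
  have w: "w \<in> carrier (tT F K')" unfolding w_def K'_def using cj_closed[OF g K u] .
  define A where "A = dcosets G L' B K'"
  define f where "f D = norm_res_conj B (B \<inter> conjset G (crep D) K') (crep D) K' w" for D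
  have A: "finite A" "A \<noteq> {}"
    unfolding A_def using finite_dcosets[OF finite_carrier] dcosets_nonempty BL' K'L'
    by (auto simp: sub2_def subgroup.subset)
  obtain D where D: "D \<in> A" using A(2) by blast
  have h: "crep D' \<in> carrier G" if "D' \<in> A" for D'
    using crep_dcosets_mem[OF BL' K'L' that[unfolded A_def]] BL' subgroup.mem_carrier
    by (auto simp: sub2_def)
  have f: "f \<in> A \<rightarrow> carrier (tT F B)"
  proof
    fix D' assume "D' \<in> A"
    then show "f D' \<in> carrier (tT F B)"
      unfolding f_def using sub2_Int_conjset[OF B h K'] h w K' by (intro norm_res_conj_closed) auto
  qed
  interpret B: cring "tT F B" using cring_level[OF B] .
  define B' where "B' = B \<inter> conjset G (crep D) K'"
  have B'B: "sub2 G B' B" unfolding B'_def using sub2_Int_conjset(1)[OF B h[OF D] K'] .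
  have B'M: "sub2 G B' M" using B'B BM by (auto simp: sub2_def)
  have B'K: "B' \<subseteq> conjset G (crep D \<otimes> g) K"
    unfolding B'_def K'_def using conjset_mult[OF h[OF D] g subgroup.subset[OF K]] by blast
  have "norm_res_conj M B g L (tnm F K L u) = tnm F B M (finprod (tT F B) f A)"
    unfolding norm_res_conj_def cj_nm[OF g KL u] K'_def[symmetric] L'_def[symmetric] w_def[symmetric]
      res_nm_mackey[OF BL' K'L' w] f_def A_def ..
  also have "\<dots> = tnm F B M (finprod (tT F B) f (A - {D})) \<otimes>\<^bsub>tT F M\<^esub> tnm F B M (f D)"
    using B.finprod_remove[OF A(1) D f] nm_mult[OF BM B.finprod_closed[of f "A - {D}"] funcset_mem[OF f D]] f
    by auto
  also have "tnm F B M (f D) = norm_res_conj M B' (crep D \<otimes> g) K u"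
    unfolding f_def B'_def[symmetric] w_def K'_def
    using nm_norm_res_conj[OF BM h[OF D] B'B _ conjset_subgroup[OF g K] cj_closed[OF g K u]]
      norm_res_conj_cj[OF h[OF D] g K u] B'_def K'_def by simp
  finally show ?thesis
    using B'M B'K h[OF D] g nm_closed[OF BM B.finprod_closed[of f "A - {D}"]] f by blast
qed

section \<open>The colon of a Tambara ideal\<close>

text \<open>This is all that the colon below needs from \<open>S\<close>. Besides Tambara ideals, the twisted norms
  of a set of generators qualify.\<close>

definition res_divisible :: "('g set \<Rightarrow> 'a set) \<Rightarrow> bool" where
  "res_divisible S \<longleftrightarrow> (\<forall>M. subgroup M G \<longrightarrow> S M \<subseteq> carrier (tT F M)) \<and>
     (\<forall>M K s. sub2 G K M \<longrightarrow> s \<in> S M \<longrightarrow>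
        (\<exists>r \<in> carrier (tT F K). \<exists>s' \<in> S K. tres F M K s = r \<otimes>\<^bsub>tT F K\<^esub> s'))"

text \<open>The largest Tambara ideal \<open>Q\<close> with \<open>Q S \<subseteq> Z\<close>. Testing membership after every
  \<^const>\<open>norm_res_conj\<close> builds closure under restriction, conjugation and norms into the definition.\<close>

definition tcolon :: "('g set \<Rightarrow> 'a set) \<Rightarrow> ('g set \<Rightarrow> 'a set) \<Rightarrow> 'g set \<Rightarrow> 'a set" where
  "tcolon S Z L = {u \<in> carrier (tT F L). \<forall>M B g s. g \<in> carrier G \<longrightarrow> sub2 G B M \<longrightarrow>
     B \<subseteq> conjset G g L \<longrightarrow> s \<in> S M \<longrightarrow> s \<otimes>\<^bsub>tT F M\<^esub> norm_res_conj M B g L u \<in> Z M}"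

lemma res_divisible_closed: "res_divisible S \<Longrightarrow> subgroup M G \<Longrightarrow> s \<in> S M \<Longrightarrow> s \<in> carrier (tT F M)"
  unfolding res_divisible_def by blast

lemma res_divisible_tideal: "tideal G F P \<Longrightarrow> res_divisible P"
  unfolding res_divisible_def
proof (intro conjI allI impI)
  fix M K s assume P: "tideal G F P" and KM: "sub2 G K M" and s: "s \<in> P M"
  have K: "subgroup K G" using KM by (simp add: sub2_def)
  have "tres F M K s \<in> P K" using tideal_res[OF P KM s] .
  moreover then have "tres F M K s = \<one>\<^bsub>tT F K\<^esub> \<otimes>\<^bsub>tT F K\<^esub> tres F M K s"
    using tideal_closed[OF P K] cring.cring_simprules(12)[OF cring_level[OF K]] by simp
  ultimately show "\<exists>r \<in> carrier (tT F K). \<exists>s' \<in> P K. tres F M K s = r \<otimes>\<^bsub>tT F K\<^esub> s'"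
    using cring.cring_simprules(6)[OF cring_level[OF K]] by blast
qed (use tideal_closed in blast)

lemma res_divisible_mult:
  assumes S: "res_divisible S" and Z: "tideal G F Z" and KM: "sub2 G K M" and s: "s \<in> S M"
    and x: "x \<in> carrier (tT F K)" and Sx: "\<And>s'. s' \<in> S K \<Longrightarrow> s' \<otimes>\<^bsub>tT F K\<^esub> x \<in> Z K"
  shows "tres F M K s \<otimes>\<^bsub>tT F K\<^esub> x \<in> Z K"
proof -
  obtain r s' where r: "r \<in> carrier (tT F K)" and s': "s' \<in> S K" and e: "tres F M K s = r \<otimes>\<^bsub>tT F K\<^esub> s'"
    using S KM s unfolding res_divisible_def by blast
  have K: "subgroup K G" using KM by (simp add: sub2_def)
  interpret K: cring "tT F K" using cring_level[OF K] .
  have "tres F M K s \<otimes>\<^bsub>tT F K\<^esub> x = r \<otimes>\<^bsub>tT F K\<^esub> (s' \<otimes>\<^bsub>tT F K\<^esub> x)"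
    using e r res_divisible_closed[OF S K s'] x by (simp add: K.m_assoc)
  then show ?thesis using tideal_mult_left[OF Z K Sx[OF s'] r] by simp
qed

lemma tcolon_closed: "u \<in> tcolon S Z L \<Longrightarrow> u \<in> carrier (tT F L)"
  unfolding tcolon_def by blast

lemma tcolonD:
  "u \<in> tcolon S Z L \<Longrightarrow> g \<in> carrier G \<Longrightarrow> sub2 G B M \<Longrightarrow> B \<subseteq> conjset G g L \<Longrightarrow> s \<in> S M \<Longrightarrow>
   s \<otimes>\<^bsub>tT F M\<^esub> norm_res_conj M B g L u \<in> Z M"
  unfolding tcolon_def by blast

lemma tcolonI:
  "u \<in> carrier (tT F L) \<Longrightarrow>
   (\<And>M B g s. g \<in> carrier G \<Longrightarrow> sub2 G B M \<Longrightarrow> B \<subseteq> conjset G g L \<Longrightarrow> s \<in> S M \<Longrightarrow>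
      s \<otimes>\<^bsub>tT F M\<^esub> norm_res_conj M B g L u \<in> Z M) \<Longrightarrow> u \<in> tcolon S Z L"
  unfolding tcolon_def by blast

lemma tcolon_mult_mem:
  assumes "u \<in> tcolon S Z L" "subgroup L G" "s \<in> S L"
  shows "s \<otimes>\<^bsub>tT F L\<^esub> u \<in> Z L"
  using tcolonD[OF assms(1) one_closed _ _ assms(3), of L] assms(2)
    conjset_one[OF subgroup.subset[OF assms(2)]] norm_res_conj_one[OF assms(2) tcolon_closed[OF assms(1)]]
  by (simp add: sub2_def)

lemma tcolon_res:
  assumes "u \<in> tcolon S Z L" "sub2 G K L"
  shows "tres F L K u \<in> tcolon S Z K"
proof (rule tcolonI)
  show "tres F L K u \<in> carrier (tT F K)" using res_closed[OF assms(2) tcolon_closed[OF assms(1)]] .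
  fix M B g s assume a: "g \<in> carrier G" "sub2 G B M" "B \<subseteq> conjset G g K" "s \<in> S M"
  have "B \<subseteq> conjset G g L" using a(3) conjset_mono[of K L g] assms(2) by (auto simp: sub2_def)
  then show "s \<otimes>\<^bsub>tT F M\<^esub> norm_res_conj M B g K (tres F L K u) \<in> Z M"
    using norm_res_conj_res[OF a(1) assms(2) a(3,2) tcolon_closed[OF assms(1)]]
      tcolonD[OF assms(1) a(1,2) _ a(4)] by simp
qed

lemma tcolon_cj:
  assumes "u \<in> tcolon S Z L" "subgroup L G" "h \<in> carrier G"
  shows "tcj F h L u \<in> tcolon S Z (conjset G h L)"
proof (rule tcolonI)
  show "tcj F h L u \<in> carrier (tT F (conjset G h L))" using cj_closed[OF assms(3,2) tcolon_closed[OF assms(1)]] .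
  fix M B g s assume "g \<in> carrier G" "sub2 G B M" "B \<subseteq> conjset G g (conjset G h L)" "s \<in> S M"
  then show "s \<otimes>\<^bsub>tT F M\<^esub> norm_res_conj M B g (conjset G h L) (tcj F h L u) \<in> Z M"
    using norm_res_conj_cj[OF _ assms(3,2) tcolon_closed[OF assms(1)]] tcolonD[OF assms(1)]
      conjset_mult[OF _ assms(3) subgroup.subset[OF assms(2)]] assms(3) by simp
qed

lemma tcolon_zero:
  assumes Z: "tideal G F Z" and S: "res_divisible S" and L: "subgroup L G"
  shows "\<zero>\<^bsub>tT F L\<^esub> \<in> tcolon S Z L"
proof (rule tcolonI)
  show "\<zero>\<^bsub>tT F L\<^esub> \<in> carrier (tT F L)" using cring.cring_simprules(2)[OF cring_level[OF L]] .
  fix M B g s assume a: "g \<in> carrier G" "sub2 G B M" "B \<subseteq> conjset G g L" "s \<in> S M"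
  have M: "subgroup M G" using a(2) by (simp add: sub2_def)
  have "norm_res_conj M B g L \<zero>\<^bsub>tT F L\<^esub> \<in> Z M"
    using tideal_norm_res_conj[OF Z a(1-3) L additive_subgroup.zero_closed[OF ideal.axioms(1)[OF tideal_ideal[OF Z L]]]] .
  then show "s \<otimes>\<^bsub>tT F M\<^esub> norm_res_conj M B g L \<zero>\<^bsub>tT F L\<^esub> \<in> Z M"
    using tideal_mult_left[OF Z M] res_divisible_closed[OF S M a(4)] by blast
qed

lemma tcolon_mult:
  assumes Z: "tideal G F Z" and S: "res_divisible S" and L: "subgroup L G"
    and u: "u \<in> tcolon S Z L" and r: "r \<in> carrier (tT F L)"
  shows "r \<otimes>\<^bsub>tT F L\<^esub> u \<in> tcolon S Z L"
proof (rule tcolonI)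
  have uc: "u \<in> carrier (tT F L)" using tcolon_closed[OF u] .
  show "r \<otimes>\<^bsub>tT F L\<^esub> u \<in> carrier (tT F L)" using cring.cring_simprules(5)[OF cring_level[OF L] r uc] .
  fix M B g s assume a: "g \<in> carrier G" "sub2 G B M" "B \<subseteq> conjset G g L" "s \<in> S M"
  have M: "subgroup M G" using a(2) by (simp add: sub2_def)
  interpret M: cring "tT F M" using cring_level[OF M] .
  have Nr: "norm_res_conj M B g L r \<in> carrier (tT F M)" using norm_res_conj_closed[OF a(1-3) L r] .
  have Nu: "norm_res_conj M B g L u \<in> carrier (tT F M)" using norm_res_conj_closed[OF a(1-3) L uc] .
  have "s \<otimes>\<^bsub>tT F M\<^esub> norm_res_conj M B g L (r \<otimes>\<^bsub>tT F L\<^esub> u)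
      = norm_res_conj M B g L r \<otimes>\<^bsub>tT F M\<^esub> (s \<otimes>\<^bsub>tT F M\<^esub> norm_res_conj M B g L u)"
    using norm_res_conj_mult[OF a(1-3) L r uc] Nr Nu res_divisible_closed[OF S M a(4)] by (simp add: M.m_lcomm)
  then show "s \<otimes>\<^bsub>tT F M\<^esub> norm_res_conj M B g L (r \<otimes>\<^bsub>tT F L\<^esub> u) \<in> Z M"
    using tideal_mult_left[OF Z M tcolonD[OF u a] Nr] by simp
qed

lemma tcolon_nm:
  assumes Z: "tideal G F Z" and S: "res_divisible S" and KL: "sub2 G K L" and u: "u \<in> tcolon S Z K"
  shows "tnm F K L u \<in> tcolon S Z L"
proof (rule tcolonI)
  show "tnm F K L u \<in> carrier (tT F L)" using nm_closed[OF KL tcolon_closed[OF u]] .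
  fix M B g s assume a: "g \<in> carrier G" "sub2 G B M" "B \<subseteq> conjset G g L" "s \<in> S M"
  have M: "subgroup M G" using a(2) by (simp add: sub2_def)
  interpret M: cring "tT F M" using cring_level[OF M] .
  obtain r g' B' where r: "r \<in> carrier (tT F M)" and g': "g' \<in> carrier G" "sub2 G B' M" "B' \<subseteq> conjset G g' K"
    and e: "norm_res_conj M B g L (tnm F K L u) = r \<otimes>\<^bsub>tT F M\<^esub> norm_res_conj M B' g' K u"
    using norm_res_conj_nm_factor[OF KL a(1-3) tcolon_closed[OF u]] by blast
  have "s \<otimes>\<^bsub>tT F M\<^esub> norm_res_conj M B g L (tnm F K L u)
      = r \<otimes>\<^bsub>tT F M\<^esub> (s \<otimes>\<^bsub>tT F M\<^esub> norm_res_conj M B' g' K u)"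
    using e r res_divisible_closed[OF S M a(4)] norm_res_conj_closed[OF g' _ tcolon_closed[OF u]] KL
    by (simp add: M.m_lcomm sub2_def)
  then show "s \<otimes>\<^bsub>tT F M\<^esub> norm_res_conj M B g L (tnm F K L u) \<in> Z M"
    using tideal_mult_left[OF Z M tcolonD[OF u g' a(4)] r] by simp
qed

lemma tcolon_res_mult:
  assumes S: "res_divisible S" and Z: "tideal G F Z" and u: "u \<in> tcolon S Z B" and B: "subgroup B G"
    and TM: "sub2 G T M" and g: "g \<in> carrier G" and s: "s \<in> S M"
  shows "tres F M T s \<otimes>\<^bsub>tT F T\<^esub> norm_res_conj T (T \<inter> conjset G g B) g B u \<in> Z T"
proof -
  have T: "subgroup T G" using TM by (simp add: sub2_def)
  show ?thesis
    using res_divisible_mult[OF S Z TM s] norm_res_conj_closed[OF g _ _ B tcolon_closed[OF u]]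
      tcolonD[OF u g] sub2_Int_conjset(1)[OF T g B] by blast
qed

text \<open>The shape of both reciprocity formulas: by Frobenius reciprocity, a single factor of each
  product that is killed by the restriction of \<open>s\<close> suffices.\<close>

lemma mult_tr_finprod_sum_mem:
  assumes Z: "tideal G F Z" and M: "subgroup M G" and s: "s \<in> carrier (tT F M)"
    and T: "\<And>Ob. Ob \<in> Obs \<Longrightarrow> sub2 G (T Ob) M"
    and f: "\<And>Ob D. Ob \<in> Obs \<Longrightarrow> D \<in> dcosets G M (T Ob) B \<Longrightarrow> f Ob D \<in> carrier (tT F (T Ob))"
    and f_mem: "\<And>Ob D. Ob \<in> Obs \<Longrightarrow> D \<in> dcosets G M (T Ob) B \<Longrightarrow>
      tres F M (T Ob) s \<otimes>\<^bsub>tT F (T Ob)\<^esub> f Ob D \<in> Z (T Ob)"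
  shows "s \<otimes>\<^bsub>tT F M\<^esub> finsum (tT F M)
    (\<lambda>Ob. ttr F (T Ob) M (finprod (tT F (T Ob)) (f Ob) (dcosets G M (T Ob) B))) Obs \<in> Z M"
proof -
  interpret M: cring "tT F M" using cring_level[OF M] .
  define J where "J = {t \<in> carrier (tT F M). s \<otimes>\<^bsub>tT F M\<^esub> t \<in> Z M}"
  have J: "ideal J (tT F M)" unfolding J_def using M.ideal_colon[OF tideal_ideal[OF Z M] s] .
  have "ttr F (T Ob) M (finprod (tT F (T Ob)) (f Ob) (dcosets G M (T Ob) B)) \<in> J" if Ob: "Ob \<in> Obs" for Ob
  proof -
    define A where "A = dcosets G M (T Ob) B"
    have TM: "sub2 G (T Ob) M" using T[OF Ob] .
    then have T': "subgroup (T Ob) G" by (simp add: sub2_def)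
    interpret T: cring "tT F (T Ob)" using cring_level[OF T'] .
    have A: "finite A" "A \<noteq> {}"
      unfolding A_def using finite_dcosets[OF finite_carrier subgroup.subset[OF M]] dcosets_nonempty[OF M] .
    obtain D where D: "D \<in> A" using A(2) by blast
    have fA: "f Ob \<in> A \<rightarrow> carrier (tT F (T Ob))" using f[OF Ob] unfolding A_def by blast
    define P where "P = finprod (tT F (T Ob)) (f Ob) A"
    have P: "P \<in> carrier (tT F (T Ob))" unfolding P_def using fA by (rule T.finprod_closed)
    have rest: "finprod (tT F (T Ob)) (f Ob) (A - {D}) \<in> carrier (tT F (T Ob))" using fA by (auto intro: T.finprod_closed)
    have rs: "tres F M (T Ob) s \<in> carrier (tT F (T Ob))" using res_closed[OF TM s] .
    have "P \<otimes>\<^bsub>tT F (T Ob)\<^esub> tres F M (T Ob) s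
        = finprod (tT F (T Ob)) (f Ob) (A - {D}) \<otimes>\<^bsub>tT F (T Ob)\<^esub>
            (tres F M (T Ob) s \<otimes>\<^bsub>tT F (T Ob)\<^esub> f Ob D)"
      unfolding P_def T.finprod_remove[OF A(1) D fA] using rest rs funcset_mem[OF fA D] by (simp add: T.m_ac)
    also have "\<dots> \<in> Z (T Ob)"
      using tideal_mult_left[OF Z T' f_mem[OF Ob D[unfolded A_def]] rest] .
    finally have "ttr F (T Ob) M (P \<otimes>\<^bsub>tT F (T Ob)\<^esub> tres F M (T Ob) s) \<in> Z M"
      by (rule tideal_tr[OF Z TM])
    then have "s \<otimes>\<^bsub>tT F M\<^esub> ttr F (T Ob) M P \<in> Z M"
      using tr_frobenius[OF TM P s] tr_closed[OF TM P] s by (simp add: M.m_comm)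
    then show ?thesis unfolding J_def P_def A_def using tr_closed[OF TM] P[unfolded P_def A_def] by blast
  qed
  then have "finsum (tT F M) (\<lambda>Ob. ttr F (T Ob) M (finprod (tT F (T Ob)) (f Ob) (dcosets G M (T Ob) B))) Obs \<in> J"
    by (rule ideal.finsum_mem[OF J])
  then show ?thesis unfolding J_def by blast
qed

lemma mult_nm_add_mem:
  assumes Z: "tideal G F Z" and BM: "sub2 G B M" and a: "a \<in> carrier (tT F B)" and b: "b \<in> carrier (tT F B)"
    and s: "s \<in> carrier (tT F M)"
    and ab: "\<And>T g t. sub2 G T M \<Longrightarrow> g \<in> M \<Longrightarrow> t = a \<or> t = b \<Longrightarrow>
      tres F M T s \<otimes>\<^bsub>tT F T\<^esub> norm_res_conj T (T \<inter> conjset G g B) g B t \<in> Z T"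
  shows "s \<otimes>\<^bsub>tT F M\<^esub> tnm F B M (a \<oplus>\<^bsub>tT F B\<^esub> b) \<in> Z M"
proof -
  have M: "subgroup M G" and B: "subgroup B G" using BM by (auto simp: sub2_def)
  have T: "sub2 G (bstab G M B (crep Ob)) M" if "Ob \<in> borbits G M B" for Ob
    using subgroup_bstab[OF B M borbits_crep_extensional[OF M that]] M
    by (auto simp: sub2_def bstab_def)
  show ?thesis
    unfolding nm_add_reciprocity[OF BM a b] Let_def
  proof (rule mult_tr_finprod_sum_mem[OF Z M s T])
    fix Ob D assume Ob: "Ob \<in> borbits G M B" and D: "D \<in> dcosets G M (bstab G M B (crep Ob)) B"
    have g: "crep D \<in> M" using crep_dcosets_mem[OF T[OF Ob] BM D] .
    then have "crep D \<in> carrier G" using subgroup.mem_carrier[OF M] by blast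
    moreover have "subgroup (bstab G M B (crep Ob)) G" using T[OF Ob] by (simp add: sub2_def)
    ultimately show "norm_res_conj (bstab G M B (crep Ob)) (bstab G M B (crep Ob) \<inter> conjset G (crep D) B)
        (crep D) B (if crep Ob (crep D <# B) then a else b) \<in> carrier (tT F (bstab G M B (crep Ob)))"
      using sub2_Int_conjset(1) B a b by (intro norm_res_conj_closed) auto
    show "tres F M (bstab G M B (crep Ob)) s \<otimes>\<^bsub>tT F (bstab G M B (crep Ob))\<^esub>
        norm_res_conj (bstab G M B (crep Ob)) (bstab G M B (crep Ob) \<inter> conjset G (crep D) B)
          (crep D) B (if crep Ob (crep D <# B) then a else b) \<in> Z (bstab G M B (crep Ob))"
      using ab[OF T[OF Ob] g] by simp
  qed
qed

lemma mult_nm_tr_mem: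
  assumes Z: "tideal G F Z" and BM: "sub2 G B M" and CB: "sub2 G C B" and w: "w \<in> carrier (tT F C)"
    and s: "s \<in> carrier (tT F M)"
    and hyp: "\<And>T g. sub2 G T M \<Longrightarrow> g \<in> M \<Longrightarrow>
      tres F M T s \<otimes>\<^bsub>tT F T\<^esub> norm_res_conj T (T \<inter> conjset G g C) g C w \<in> Z T"
  shows "s \<otimes>\<^bsub>tT F M\<^esub> tnm F B M (ttr F C B w) \<in> Z M"
proof -
  have M: "subgroup M G" and B: "subgroup B G" and C: "subgroup C G" and CM: "sub2 G C M"
    using BM CB by (auto simp: sub2_def)
  have T: "sub2 G (sstab G M B (crep Ob)) M" if "Ob \<in> sorbits G M B C" for Ob
    using subgroup_sstab[OF B M C sorbits_crep_funcset[OF B M C that]] M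
    by (auto simp: sub2_def sstab_def)
  have g: "crep (crep Ob (crep D <# B)) \<in> M"
    if "Ob \<in> sorbits G M B C" "D \<in> dcosets G M (sstab G M B (crep Ob)) B" for Ob D
  proof -
    have "crep D <# B \<in> lcos G M B" using crep_dcosets_mem[OF T[OF that(1)] BM that(2)] by (simp add: lcos_def)
    then have "crep Ob (crep D <# B) \<in> lcos G M C" using sorbits_crep_funcset[OF B M C that(1)] by blast
    then show ?thesis by (rule crep_lcos_mem[OF CM])
  qed
  show ?thesis
    unfolding nm_tr_reciprocity[OF BM CB w] Let_def
  proof (rule mult_tr_finprod_sum_mem[OF Z M s T])
    fix Ob D assume Ob: "Ob \<in> sorbits G M B C" and D: "D \<in> dcosets G M (sstab G M B (crep Ob)) B"
    have "crep (crep Ob (crep D <# B)) \<in> carrier G" using g[OF Ob D] subgroup.mem_carrier[OF M] by blast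
    moreover have "subgroup (sstab G M B (crep Ob)) G" using T[OF Ob] by (simp add: sub2_def)
    ultimately show "norm_res_conj (sstab G M B (crep Ob))
        (sstab G M B (crep Ob) \<inter> conjset G (crep (crep Ob (crep D <# B))) C) (crep (crep Ob (crep D <# B))) C w
        \<in> carrier (tT F (sstab G M B (crep Ob)))"
      using sub2_Int_conjset(1) C w by (intro norm_res_conj_closed) auto
  qed (assumption | rule hyp T g)+
qed

lemma tcolon_add:
  assumes Z: "tideal G F Z" and S: "res_divisible S" and L: "subgroup L G"
    and u: "u \<in> tcolon S Z L" and v: "v \<in> tcolon S Z L"
  shows "u \<oplus>\<^bsub>tT F L\<^esub> v \<in> tcolon S Z L"
proof (rule tcolonI)
  have uc: "u \<in> carrier (tT F L)" and vc: "v \<in> carrier (tT F L)" using tcolon_closed u v by blast+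
  show "u \<oplus>\<^bsub>tT F L\<^esub> v \<in> carrier (tT F L)" using cring.cring_simprules(1)[OF cring_level[OF L] uc vc] .
  fix M B g s assume a: "g \<in> carrier G" "sub2 G B M" "B \<subseteq> conjset G g L" "s \<in> S M"
  have B: "subgroup B G" and M: "subgroup M G" using a(2) by (auto simp: sub2_def)
  have BL: "sub2 G B (conjset G g L)" using sub2_conjset_of_subset[OF a(1) L a(2,3)] .
  define x where "x = tres F (conjset G g L) B (tcj F g L u)"
  define y where "y = tres F (conjset G g L) B (tcj F g L v)"
  have x: "x \<in> tcolon S Z B" unfolding x_def using tcolon_res[OF tcolon_cj[OF u L a(1)] BL] .
  have y: "y \<in> tcolon S Z B" unfolding y_def using tcolon_res[OF tcolon_cj[OF v L a(1)] BL] .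
  have "tres F (conjset G g L) B (tcj F g L (u \<oplus>\<^bsub>tT F L\<^esub> v)) = x \<oplus>\<^bsub>tT F B\<^esub> y"
    unfolding x_def y_def using cj_add[OF a(1) L uc vc] res_add[OF BL cj_closed[OF a(1) L uc] cj_closed[OF a(1) L vc]]
    by simp
  moreover have "s \<otimes>\<^bsub>tT F M\<^esub> tnm F B M (x \<oplus>\<^bsub>tT F B\<^esub> y) \<in> Z M"
  proof (rule mult_nm_add_mem[OF Z a(2) tcolon_closed[OF x] tcolon_closed[OF y] res_divisible_closed[OF S M a(4)]])
    fix T h t assume "sub2 G T M" "h \<in> M" "t = x \<or> t = y"
    then show "tres F M T s \<otimes>\<^bsub>tT F T\<^esub> norm_res_conj T (T \<inter> conjset G h B) h B t \<in> Z T"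
      using tcolon_res_mult[OF S Z _ B _ _ a(4)] x y subgroup.mem_carrier[OF M] by blast
  qed
  ultimately show "s \<otimes>\<^bsub>tT F M\<^esub> norm_res_conj M B g L (u \<oplus>\<^bsub>tT F L\<^esub> v) \<in> Z M"
    unfolding norm_res_conj_def by simp
qed

text \<open>Restricting a transfer produces, by the Mackey formula, such sums rather than single transfers.\<close>

inductive_set transfer_sums :: "('g set \<Rightarrow> 'a set) \<Rightarrow> ('g set \<Rightarrow> 'a set) \<Rightarrow> 'g set \<Rightarrow> 'a set"
  for S Z B where
  zero: "\<zero>\<^bsub>tT F B\<^esub> \<in> transfer_sums S Z B"
| tr_add: "sub2 G C B \<Longrightarrow> w \<in> tcolon S Z C \<Longrightarrow> e \<in> transfer_sums S Z B \<Longrightarrow>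
    ttr F C B w \<oplus>\<^bsub>tT F B\<^esub> e \<in> transfer_sums S Z B"

lemma transfer_sums_closed:
  assumes "subgroup B G" "e \<in> transfer_sums S Z B"
  shows "e \<in> carrier (tT F B)"
  using assms(2)
proof induction
  case zero
  then show ?case using cring.cring_simprules(2)[OF cring_level[OF assms(1)]] .
next
  case (tr_add C w e)
  then show ?case
    using cring.cring_simprules(1)[OF cring_level[OF assms(1)]] tr_closed tcolon_closed by blast
qed

lemma transfer_sums_add:
  assumes B: "subgroup B G" and e: "e \<in> transfer_sums S Z B" and e': "e' \<in> transfer_sums S Z B"
  shows "e \<oplus>\<^bsub>tT F B\<^esub> e' \<in> transfer_sums S Z B"
  using e
proof induction
  interpret B: cring "tT F B" using cring_level[OF B] .
  case zero
  then show ?case using transfer_sums_closed[OF B e'] e' by simp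
next
  interpret B: cring "tT F B" using cring_level[OF B] .
  case (tr_add C w e)
  have "ttr F C B w \<oplus>\<^bsub>tT F B\<^esub> e \<oplus>\<^bsub>tT F B\<^esub> e' =
      ttr F C B w \<oplus>\<^bsub>tT F B\<^esub> (e \<oplus>\<^bsub>tT F B\<^esub> e')"
    using tr_closed[OF tr_add(1) tcolon_closed[OF tr_add(2)]] transfer_sums_closed[OF B tr_add(3)]
      transfer_sums_closed[OF B e'] by (simp add: B.a_assoc)
  then show ?case using transfer_sums.tr_add[OF tr_add(1,2,4)] by simp
qed

lemma tr_mem_transfer_sums:
  assumes "sub2 G C B" "w \<in> tcolon S Z C"
  shows "ttr F C B w \<in> transfer_sums S Z B"
proof -
  have "subgroup B G" using assms(1) by (simp add: sub2_def)
  then show ?thesis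
    using transfer_sums.tr_add[OF assms transfer_sums.zero] tr_closed[OF assms(1) tcolon_closed[OF assms(2)]]
    by (simp add: cring.cring_simprules(16)[OF cring_level])
qed

lemma transfer_sums_finsum:
  assumes B: "subgroup B G" and f: "\<And>x. x \<in> A \<Longrightarrow> f x \<in> transfer_sums S Z B"
  shows "finsum (tT F B) f A \<in> transfer_sums S Z B"
proof -
  interpret B: cring "tT F B" using cring_level[OF B] .
  show ?thesis
  proof (cases "finite A")
    case True
    then show ?thesis using f
    proof (induction A rule: finite_induct)
      case (insert a A)
      then have "finsum (tT F B) f (insert a A) = f a \<oplus>\<^bsub>tT F B\<^esub> finsum (tT F B) f A"
        using transfer_sums_closed[OF B] by (intro B.finsum_insert) auto
      then show ?case using transfer_sums_add[OF B] insert by simp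
    qed (simp add: transfer_sums.zero)
  qed (simp add: transfer_sums.zero)
qed

lemma transfer_sums_res:
  assumes KB: "sub2 G K B" and e: "e \<in> transfer_sums S Z B"
  shows "tres F B K e \<in> transfer_sums S Z K"
  using e
proof induction
  case zero
  then show ?case using res_zero[OF KB] transfer_sums.zero by simp
next
  case (tr_add C w e)
  have B: "subgroup B G" and K: "subgroup K G" using KB by (auto simp: sub2_def)
  have C: "subgroup C G" using tr_add(1) by (simp add: sub2_def)
  have w: "w \<in> carrier (tT F C)" using tcolon_closed[OF tr_add(2)] .
  have "tres F B K (ttr F C B w) \<in> transfer_sums S Z K"
    unfolding res_tr_mackey[OF KB tr_add(1) w] Let_def
  proof (rule transfer_sums_finsum[OF K])
    fix D assume D: "D \<in> dcosets G B K C"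
    have h: "crep D \<in> carrier G" using crep_dcosets_mem[OF KB tr_add(1) D] subgroup.mem_carrier[OF B] by blast
    show "ttr F (K \<inter> conjset G (crep D) C) K (tres F (conjset G (crep D) C) (K \<inter> conjset G (crep D) C)
        (tcj F (crep D) C w)) \<in> transfer_sums S Z K"
      using tr_mem_transfer_sums[OF sub2_Int_conjset(1)[OF K h C]
          tcolon_res[OF tcolon_cj[OF tr_add(2) C h] sub2_Int_conjset(2)[OF K h C]]] .
  qed
  then show ?case
    using res_add[OF KB tr_closed[OF tr_add(1) w] transfer_sums_closed[OF B tr_add(3)]]
      transfer_sums_add[OF K _ tr_add(4)] by simp
qed

lemma transfer_sums_cj:
  assumes g: "g \<in> carrier G" and B: "subgroup B G" and e: "e \<in> transfer_sums S Z B"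
  shows "tcj F g B e \<in> transfer_sums S Z (conjset G g B)"
  using e
proof induction
  case zero
  then show ?case using cj_zero[OF g B] transfer_sums.zero by simp
next
  case (tr_add C w e)
  have C: "subgroup C G" using tr_add(1) by (simp add: sub2_def)
  have w: "w \<in> carrier (tT F C)" using tcolon_closed[OF tr_add(2)] .
  have "tcj F g B (ttr F C B w) \<in> transfer_sums S Z (conjset G g B)"
    unfolding cj_tr[OF g tr_add(1) w]
    by (rule tr_mem_transfer_sums[OF sub2_conjset[OF g tr_add(1)] tcolon_cj[OF tr_add(2) C g]])
  then show ?case
    using cj_add[OF g B tr_closed[OF tr_add(1) w] transfer_sums_closed[OF B tr_add(3)]]
      transfer_sums_add[OF conjset_subgroup[OF g B] _ tr_add(4)] by simp
qed

lemma mult_nm_tr_tcolon_mem: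
  assumes S: "res_divisible S" and Z: "tideal G F Z" and BM: "sub2 G B M" and CB: "sub2 G C B"
    and w: "w \<in> tcolon S Z C" and s: "s \<in> S M"
  shows "s \<otimes>\<^bsub>tT F M\<^esub> tnm F B M (ttr F C B w) \<in> Z M"
proof -
  have M: "subgroup M G" and C: "subgroup C G" using BM CB by (auto simp: sub2_def)
  show ?thesis
    using mult_nm_tr_mem[OF Z BM CB tcolon_closed[OF w] res_divisible_closed[OF S M s]]
      tcolon_res_mult[OF S Z w C _ _ s] subgroup.mem_carrier[OF M] by blast
qed

text \<open>Induction on \<open>|M|\<close>: in the reciprocity formula for the norm of a sum, the terms indexed by
  proper subgroups of \<open>M\<close> are handled by the induction hypothesis, and the terms for \<open>M\<close> itself
  are norms of the summands.\<close>

lemma mult_nm_transfer_sums_mem: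
  assumes Z: "tideal G F Z" and S: "res_divisible S"
  shows "sub2 G B M \<Longrightarrow> v \<in> transfer_sums S Z B \<Longrightarrow> s \<in> S M \<Longrightarrow> s \<otimes>\<^bsub>tT F M\<^esub> tnm F B M v \<in> Z M"
proof (induction "card M" arbitrary: M B v s rule: less_induct)
  case less
  have BM: "sub2 G B M" using less.prems(1) .
  have M: "subgroup M G" and B: "subgroup B G" using BM by (auto simp: sub2_def)
  from less.prems(2) have "\<forall>s \<in> S M. s \<otimes>\<^bsub>tT F M\<^esub> tnm F B M v \<in> Z M"
  proof induction
    case zero
    have "tnm F B M \<zero>\<^bsub>tT F B\<^esub> \<in> Z M"
      using tideal_nm[OF Z BM additive_subgroup.zero_closed[OF ideal.axioms(1)[OF tideal_ideal[OF Z B]]]] .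
    then show ?case using tideal_mult_left[OF Z M] res_divisible_closed[OF S M] by blast
  next
    case (tr_add C w e)
    have w: "w \<in> carrier (tT F C)" using tcolon_closed[OF tr_add(2)] .
    show ?case
    proof
      fix s assume s: "s \<in> S M"
      show "s \<otimes>\<^bsub>tT F M\<^esub> tnm F B M (ttr F C B w \<oplus>\<^bsub>tT F B\<^esub> e) \<in> Z M"
      proof (rule mult_nm_add_mem[OF Z BM tr_closed[OF tr_add(1) w] transfer_sums_closed[OF B tr_add(3)]
            res_divisible_closed[OF S M s]])
        fix T g t assume TM: "sub2 G T M" and g: "g \<in> M" and t: "t = ttr F C B w \<or> t = e"
        have tE: "t \<in> transfer_sums S Z B" using t tr_mem_transfer_sums[OF tr_add(1,2)] tr_add(3) by blast
        have tc: "t \<in> carrier (tT F B)" using transfer_sums_closed[OF B tE] .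
        have g': "g \<in> carrier G" using subgroup.mem_carrier[OF M g] .
        show "tres F M T s \<otimes>\<^bsub>tT F T\<^esub> norm_res_conj T (T \<inter> conjset G g B) g B t \<in> Z T"
        proof (cases "T = M")
          case True
          have "s \<otimes>\<^bsub>tT F M\<^esub> tnm F B M t \<in> Z M"
            using t tr_add(4) s mult_nm_tr_tcolon_mem[OF S Z BM tr_add(1,2) s] by blast
          then show ?thesis
            using True res_self[OF M res_divisible_closed[OF S M s]] norm_res_conj_member[OF g BM tc] by simp
        next
          case False
          have T: "subgroup T G" using TM by (simp add: sub2_def)
          have "card T < card M"
            using False TM finite_subset[OF subgroup.subset[OF M] finite_carrier]
            by (auto simp: sub2_def intro: psubset_card_mono)
          moreover have "tres F (conjset G g B) (T \<inter> conjset G g B) (tcj F g B t)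
              \<in> transfer_sums S Z (T \<inter> conjset G g B)"
            using transfer_sums_res[OF sub2_Int_conjset(2)[OF T g' B] transfer_sums_cj[OF g' B tE]] .
          ultimately show ?thesis
            unfolding norm_res_conj_def
            using res_divisible_mult[OF S Z TM s] less.hyps[OF _ sub2_Int_conjset(1)[OF T g' B]]
              nm_closed[OF sub2_Int_conjset(1)[OF T g' B]
                res_closed[OF sub2_Int_conjset(2)[OF T g' B] cj_closed[OF g' B tc]]]
            by blast
        qed
      qed
    qed
  qed
  then show ?case using less.prems(3) by blast
qed

lemma transfer_sums_subset_tcolon:
  assumes Z: "tideal G F Z" and S: "res_divisible S" and L: "subgroup L G" and v: "v \<in> transfer_sums S Z L"
  shows "v \<in> tcolon S Z L"
proof (rule tcolonI)
  show "v \<in> carrier (tT F L)" using transfer_sums_closed[OF L v] .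
  fix M B g s assume a: "g \<in> carrier G" "sub2 G B M" "B \<subseteq> conjset G g L" "s \<in> S M"
  have "tres F (conjset G g L) B (tcj F g L v) \<in> transfer_sums S Z B"
    using transfer_sums_res[OF sub2_conjset_of_subset[OF a(1) L a(2,3)] transfer_sums_cj[OF a(1) L v]] .
  then show "s \<otimes>\<^bsub>tT F M\<^esub> norm_res_conj M B g L v \<in> Z M"
    unfolding norm_res_conj_def using mult_nm_transfer_sums_mem[OF Z S a(2) _ a(4)] by blast
qed

lemma tideal_tcolon:
  assumes Z: "tideal G F Z" and S: "res_divisible S"
  shows "tideal G F (tcolon S Z)"
  unfolding tideal_def
proof (intro conjI allI impI)
  fix H assume H: "subgroup H G"
  show "ideal (tcolon S Z H) (tT F H)"
    using tcolon_closed tcolon_zero[OF Z S H] tcolon_add[OF Z S H] tcolon_mult[OF Z S H]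
    by (intro cring.cring_idealI[OF cring_level[OF H]]) auto
next
  fix H K assume KH: "sub2 G K H"
  have "subgroup K G" "subgroup H G" using KH by (auto simp: sub2_def)
  then show "tres F H K ` tcolon S Z H \<subseteq> tcolon S Z K"
    and "ttr F K H ` tcolon S Z K \<subseteq> tcolon S Z H"
    and "tnm F K H ` tcolon S Z K \<subseteq> tcolon S Z H"
    using tcolon_res[OF _ KH] transfer_sums_subset_tcolon[OF Z S] tr_mem_transfer_sums[OF KH]
      tcolon_nm[OF Z S KH] by auto
next
  fix g H assume "g \<in> carrier G" "subgroup H G"
  then show "tcj F g H ` tcolon S Z H \<subseteq> tcolon S Z (conjset G g H)" using tcolon_cj by blast
qed

section \<open>Products and powers of Tambara ideals\<close>

lemma valid_gens_tprod:
  assumes "tideal G F A" "tideal G F B"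
  shows "valid_gens {(H, a \<otimes>\<^bsub>tT F H\<^esub> b) | H a b. subgroup H G \<and> a \<in> A H \<and> b \<in> B H}"
  unfolding valid_gens_def
  using tideal_closed[OF assms(1)] tideal_closed[OF assms(2)] cring.cring_simprules(5)[OF cring_level]
  by fastforce

lemma tideal_tprod: "tideal G F A \<Longrightarrow> tideal G F B \<Longrightarrow> tideal G F (tprod G F A B)"
  unfolding tprod_def by (rule tideal_tgen[OF valid_gens_tprod])

lemma tprod_mem: "subgroup H G \<Longrightarrow> a \<in> A H \<Longrightarrow> b \<in> B H \<Longrightarrow> a \<otimes>\<^bsub>tT F H\<^esub> b \<in> tprod G F A B H"
  unfolding tprod_def by (rule tgen_mem) blast

lemma tprod_least:
  assumes "tideal G F W" "\<And>H a b. subgroup H G \<Longrightarrow> a \<in> A H \<Longrightarrow> b \<in> B H \<Longrightarrow> a \<otimes>\<^bsub>tT F H\<^esub> b \<in> W H"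
  shows "tprod G F A B H \<subseteq> W H"
  unfolding tprod_def by (rule tgen_least[OF assms(1)]) (use assms(2) in blast)

lemma tprod_mono:
  assumes "tsubseteq G A A'" "tsubseteq G B B'"
  shows "tprod G F A B H \<subseteq> tprod G F A' B' H"
  unfolding tprod_def by (rule tgen_mono) (use assms in \<open>fastforce simp: tsubseteq_def\<close>)

lemma tprod_subset_of_subset_tcolon:
  assumes Z: "tideal G F Z" and P: "tideal G F P" and Q: "tsubseteq G Q (tcolon P Z)"
  shows "tprod G F Q P H \<subseteq> Z H"
proof (rule tprod_least[OF Z])
  fix H q p assume a: "subgroup H G" "q \<in> Q H" "p \<in> P H"
  have q: "q \<in> tcolon P Z H" using Q a(1,2) by (auto simp: tsubseteq_def)
  have "p \<otimes>\<^bsub>tT F H\<^esub> q \<in> Z H" by (rule tcolon_mult_mem[OF q a(1,3)])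
  then show "q \<otimes>\<^bsub>tT F H\<^esub> p \<in> Z H"
    using cring.cring_simprules(14)[OF cring_level[OF a(1)] tideal_closed[OF P a(1,3)] tcolon_closed[OF q]]
    by simp
qed

text \<open>\<open>AB \<subseteq> (A(BC) : C)\<close>, because \<open>(A(BC) : C)\<close> is a Tambara ideal containing all products \<open>ab\<close>.\<close>

lemma tprod_assoc_subset:
  assumes A: "tideal G F A" and B: "tideal G F B" and C: "tideal G F C"
  shows "tprod G F (tprod G F A B) C H \<subseteq> tprod G F A (tprod G F B C) H"
proof -
  define W where "W = tprod G F A (tprod G F B C)"
  have W: "tideal G F W" unfolding W_def using tideal_tprod[OF A tideal_tprod[OF B C]] .
  have "tsubseteq G (tprod G F A B) (tcolon C W)"
    unfolding tsubseteq_def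
  proof (intro allI impI tprod_least[OF tideal_tcolon[OF W res_divisible_tideal[OF C]]])
    fix L a b assume L: "subgroup L G" and a: "a \<in> A L" and b: "b \<in> B L"
    have ac: "a \<in> carrier (tT F L)" and bc: "b \<in> carrier (tT F L)"
      using tideal_closed[OF A L a] tideal_closed[OF B L b] .
    show "a \<otimes>\<^bsub>tT F L\<^esub> b \<in> tcolon C W L"
    proof (rule tcolonI)
      show "a \<otimes>\<^bsub>tT F L\<^esub> b \<in> carrier (tT F L)" using cring.cring_simprules(5)[OF cring_level[OF L] ac bc] .
      fix M D g c assume r: "g \<in> carrier G" "sub2 G D M" "D \<subseteq> conjset G g L" "c \<in> C M"
      have M: "subgroup M G" using r(2) by (simp add: sub2_def)
      interpret M: cring "tT F M" using cring_level[OF M] .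
      define x where "x = norm_res_conj M D g L a"
      define y where "y = norm_res_conj M D g L b"
      have x: "x \<in> A M" unfolding x_def using tideal_norm_res_conj[OF A r(1-3) L a] .
      have y: "y \<in> B M" unfolding y_def using tideal_norm_res_conj[OF B r(1-3) L b] .
      have "c \<otimes>\<^bsub>tT F M\<^esub> norm_res_conj M D g L (a \<otimes>\<^bsub>tT F L\<^esub> b) =
          x \<otimes>\<^bsub>tT F M\<^esub> (y \<otimes>\<^bsub>tT F M\<^esub> c)"
        unfolding x_def y_def norm_res_conj_mult[OF r(1-3) L ac bc]
        using tideal_closed[OF C M r(4)] norm_res_conj_closed[OF r(1-3) L] ac bc by (simp add: M.m_ac)
      also have "\<dots> \<in> W M"
        unfolding W_def using tprod_mem[where A=A and B="tprod G F B C", OF M x tprod_mem[where A=B and B=C, OF M y r(4)]] .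
      finally show "c \<otimes>\<^bsub>tT F M\<^esub> norm_res_conj M D g L (a \<otimes>\<^bsub>tT F L\<^esub> b) \<in> W M" .
    qed
  qed
  then show ?thesis unfolding W_def[symmetric] by (rule tprod_subset_of_subset_tcolon[OF W C])
qed

lemma tpow_Suc: "1 \<le> n \<Longrightarrow> tpow G F I (Suc n) = tprod G F (tpow G F I n) I"
  by (cases n) auto

lemma tideal_tpow: "tideal G F P \<Longrightarrow> 1 \<le> n \<Longrightarrow> tideal G F (tpow G F P n)"
proof (induction n)
  case (Suc n)
  then show ?case by (cases "n = 0") (auto simp: tpow_Suc tideal_tprod)
qed simp

lemma tpow_add:
  assumes P: "tideal G F P" and j: "1 \<le> j" and m: "1 \<le> m"
  shows "tpow G F P (j + m) H \<subseteq> tprod G F (tpow G F P j) (tpow G F P m) H"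
  using m
proof (induction m arbitrary: H rule: nat_induct_at_least)
  case base
  then show ?case using tpow_Suc[OF j] by simp
next
  case (Suc m)
  have "tpow G F P (j + Suc m) H = tprod G F (tpow G F P (j + m)) P H"
    using tpow_Suc[of "j + m" P] Suc.hyps by simp
  also have "\<dots> \<subseteq> tprod G F (tprod G F (tpow G F P j) (tpow G F P m)) P H"
    by (rule tprod_mono) (use Suc.IH in \<open>auto simp: tsubseteq_def\<close>)
  also have "\<dots> \<subseteq> tprod G F (tpow G F P j) (tprod G F (tpow G F P m) P) H"
    by (rule tprod_assoc_subset[OF tideal_tpow[OF P j] tideal_tpow[OF P Suc.hyps] P])
  also have "\<dots> = tprod G F (tpow G F P j) (tpow G F P (Suc m)) H"
    using tpow_Suc[OF Suc.hyps, of P] by simp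
  finally show ?case .
qed

section \<open>Radicals\<close>

lemma trad_mono:
  assumes "tsubseteq G I J"
  shows "trad G F I H \<subseteq> trad G F J H"
  using assms unfolding trad_def tsubseteq_def by blast

lemma trad_Int_eq:
  assumes I: "tideal G F I" and J: "tideal G F J" and ZI: "tsubseteq G Z I" and ZJ: "tsubseteq G Z J"
    and IJ: "tsubseteq G (tprod G F I J) Z" and H: "subgroup H G"
  shows "trad G F I H \<inter> trad G F J H = trad G F Z H"
proof
  show "trad G F I H \<inter> trad G F J H \<subseteq> trad G F Z H"
  proof
    fix w assume w: "w \<in> trad G F I H \<inter> trad G F J H"
    define P where "P = tgen G F {(H, w)}"
    have wc: "w \<in> carrier (tT F H)" using w unfolding trad_def by blast
    obtain n m where n: "1 \<le> n" "tsubseteq G (tpow G F P n) I" and m: "1 \<le> m" "tsubseteq G (tpow G F P m) J"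
      using w unfolding trad_def P_def by blast
    have P: "tideal G F P" unfolding P_def using H wc by (intro tideal_tgen) (simp add: valid_gens_def)
    have "tpow G F P (n + m) L \<subseteq> Z L" if L: "subgroup L G" for L
    proof -
      have "tpow G F P (n + m) L \<subseteq> tprod G F (tpow G F P n) (tpow G F P m) L" by (rule tpow_add[OF P n(1) m(1)])
      also have "\<dots> \<subseteq> tprod G F I J L" by (rule tprod_mono[OF n(2) m(2)])
      also have "\<dots> \<subseteq> Z L" using IJ L by (simp add: tsubseteq_def)
      finally show ?thesis .
    qed
    then have "tsubseteq G (tpow G F P (n + m)) Z" by (simp add: tsubseteq_def)
    then show "w \<in> trad G F Z H"
      unfolding trad_def P_def using wc n(1) by (auto intro!: exI[of _ "n + m"])
  qed
  show "trad G F Z H \<subseteq> trad G F I H \<inter> trad G F J H"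
    using trad_mono[OF ZI] trad_mono[OF ZJ] by blast
qed

section \<open>Generators of a product\<close>

definition gen_norms :: "('g set \<times> 'a) set \<Rightarrow> 'g set \<Rightarrow> 'a set" where
  "gen_norms U M = {norm_res_conj M B g H x | g B H x.
     (H, x) \<in> U \<and> g \<in> carrier G \<and> sub2 G B M \<and> B \<subseteq> conjset G g H}"

lemma gen_normsI:
  "(H, x) \<in> U \<Longrightarrow> g \<in> carrier G \<Longrightarrow> sub2 G B M \<Longrightarrow> B \<subseteq> conjset G g H \<Longrightarrow>
   norm_res_conj M B g H x \<in> gen_norms U M"
  unfolding gen_norms_def by blast

lemma gen_norms_subset_tgen:
  assumes U: "valid_gens U" and M: "subgroup M G"
  shows "gen_norms U M \<subseteq> tgen G F U M"
  unfolding gen_norms_def valid_gens_def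
  using tideal_norm_res_conj[OF tideal_tgen[OF U] _ _ _ _ tgen_mem] U unfolding valid_gens_def by blast

lemma res_divisible_gen_norms:
  assumes U: "valid_gens U"
  shows "res_divisible (gen_norms U)"
  unfolding res_divisible_def
proof (intro conjI allI impI)
  fix M assume "subgroup M G"
  then show "gen_norms U M \<subseteq> carrier (tT F M)"
    using gen_norms_subset_tgen[OF U] tideal_closed[OF tideal_tgen[OF U]] by blast
next
  fix M K s assume KM: "sub2 G K M" and s: "s \<in> gen_norms U M"
  then obtain g B H x where x: "(H, x) \<in> U" and g: "g \<in> carrier G" "sub2 G B M" "B \<subseteq> conjset G g H"
    and s_eq: "s = norm_res_conj M B g H x"
    unfolding gen_norms_def by blast
  have H: "subgroup H G" and xc: "x \<in> carrier (tT F H)" using U x unfolding valid_gens_def by auto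
  show "\<exists>r \<in> carrier (tT F K). \<exists>s' \<in> gen_norms U K. tres F M K s = r \<otimes>\<^bsub>tT F K\<^esub> s'"
    using res_norm_res_conj_factor[OF KM g H xc] gen_normsI[OF x] unfolding s_eq by blast
qed

lemma finite_gen_norms:
  assumes "finite U"
  shows "finite (gen_norms U M)"
proof -
  have "gen_norms U M \<subseteq> (\<lambda>(g, B, H, x). norm_res_conj M B g H x) ` (carrier G \<times> Pow (carrier G) \<times> U)"
  proof
    fix s assume "s \<in> gen_norms U M"
    then obtain g B H x where "(H, x) \<in> U" "g \<in> carrier G" "sub2 G B M" "s = norm_res_conj M B g H x"
      unfolding gen_norms_def by blast
    moreover have "B \<subseteq> carrier G" using \<open>sub2 G B M\<close> subgroup.subset by (auto simp: sub2_def)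
    ultimately show "s \<in> (\<lambda>(g, B, H, x). norm_res_conj M B g H x) ` (carrier G \<times> Pow (carrier G) \<times> U)"
      by (intro image_eqI[of _ _ "(g, B, H, x)"]) auto
  qed
  then show ?thesis
    using assms finite_carrier by (meson finite_Pow_iff finite_SigmaI finite_imageI finite_subset)
qed

definition prod_gens :: "('g set \<times> 'a) set \<Rightarrow> ('g set \<times> 'a) set \<Rightarrow> ('g set \<times> 'a) set" where
  "prod_gens U V = {(M, s \<otimes>\<^bsub>tT F M\<^esub> t) | M s t. subgroup M G \<and> s \<in> gen_norms U M \<and> t \<in> gen_norms V M}"

lemma finite_prod_gens:
  assumes "finite U" "finite V"
  shows "finite (prod_gens U V)"
proof -
  have "prod_gens U V \<subseteq> (\<lambda>(M, s, t). (M, s \<otimes>\<^bsub>tT F M\<^esub> t)) `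
      (SIGMA M:Pow (carrier G). gen_norms U M \<times> gen_norms V M)"
  proof
    fix p assume "p \<in> prod_gens U V"
    then obtain M s t where "subgroup M G" "s \<in> gen_norms U M" "t \<in> gen_norms V M"
      "p = (M, s \<otimes>\<^bsub>tT F M\<^esub> t)"
      unfolding prod_gens_def by blast
    then show "p \<in> (\<lambda>(M, s, t). (M, s \<otimes>\<^bsub>tT F M\<^esub> t)) `
        (SIGMA M:Pow (carrier G). gen_norms U M \<times> gen_norms V M)"
      using subgroup.subset by (intro image_eqI[of _ _ "(M, s, t)"]) auto
  qed
  then show ?thesis
    using assms finite_carrier finite_gen_norms by (meson finite_Pow_iff finite_SigmaI finite_imageI finite_subset)
qed

lemma valid_gens_prod_gens:
  assumes "valid_gens U" "valid_gens V"
  shows "valid_gens (prod_gens U V)"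
proof -
  have "s \<otimes>\<^bsub>tT F M\<^esub> t \<in> carrier (tT F M)"
    if "subgroup M G" "s \<in> gen_norms U M" "t \<in> gen_norms V M" for M s t
    using that res_divisible_closed[OF res_divisible_gen_norms[OF assms(1)]]
      res_divisible_closed[OF res_divisible_gen_norms[OF assms(2)]]
    by (intro cring.cring_simprules(5)[OF cring_level]) auto
  then show ?thesis unfolding valid_gens_def prod_gens_def by auto
qed

lemma tgen_prod_gens_subset:
  assumes U: "valid_gens U" and V: "valid_gens V"
  shows "tsubseteq G (tgen G F (prod_gens U V)) (tgen G F U)"
    and "tsubseteq G (tgen G F (prod_gens U V)) (tgen G F V)"
proof -
  have gens: "z \<in> tgen G F U M \<and> z \<in> tgen G F V M" if Mz: "(M, z) \<in> prod_gens U V" for M z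
  proof -
    obtain s t where M: "subgroup M G" and s: "s \<in> gen_norms U M" and t: "t \<in> gen_norms V M"
      and z: "z = s \<otimes>\<^bsub>tT F M\<^esub> t"
      using Mz unfolding prod_gens_def by blast
    have sU: "s \<in> tgen G F U M" and tV: "t \<in> tgen G F V M"
      using gen_norms_subset_tgen[OF U M] gen_norms_subset_tgen[OF V M] s t by blast+
    show ?thesis
      unfolding z using tideal_mult_right[OF tideal_tgen[OF U] M sU tideal_closed[OF tideal_tgen[OF V] M tV]]
        tideal_mult_left[OF tideal_tgen[OF V] M tV tideal_closed[OF tideal_tgen[OF U] M sU]] by blast
  qed
  show "tsubseteq G (tgen G F (prod_gens U V)) (tgen G F U)"
    unfolding tsubseteq_def using tgen_least[OF tideal_tgen[OF U]] gens by blast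
  show "tsubseteq G (tgen G F (prod_gens U V)) (tgen G F V)"
    unfolding tsubseteq_def using tgen_least[OF tideal_tgen[OF V]] gens by blast
qed

text \<open>A generator \<open>y\<close> of \<open>V\<close> times a twisted norm of a generator of \<open>U\<close> is a generator of the
  product, so \<open>\<langle>V\<rangle> \<subseteq> (Z : gen_norms U)\<close>. Hence every generator \<open>x\<close> of \<open>U\<close>, whose twisted
  norms lie in \<open>gen_norms U\<close>, lies in \<open>(Z : \<langle>V\<rangle>)\<close>, and so \<open>\<langle>U\<rangle>\<langle>V\<rangle> \<subseteq> Z\<close>.\<close>

lemma tprod_tgen_subset:
  assumes U: "valid_gens U" and V: "valid_gens V"
  shows "tsubseteq G (tprod G F (tgen G F U) (tgen G F V)) (tgen G F (prod_gens U V))"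
proof -
  define Z where "Z = tgen G F (prod_gens U V)"
  have Z: "tideal G F Z" unfolding Z_def using tideal_tgen[OF valid_gens_prod_gens[OF U V]] .
  have VZ: "tsubseteq G (tgen G F V) (tcolon (gen_norms U) Z)"
    unfolding tsubseteq_def
  proof (intro allI impI tgen_least[OF tideal_tcolon[OF Z res_divisible_gen_norms[OF U]]])
    fix K y assume Ky: "(K, y) \<in> V"
    show "y \<in> tcolon (gen_norms U) Z K"
    proof (rule tcolonI)
      show "y \<in> carrier (tT F K)" using V Ky by (auto simp: valid_gens_def)
      fix M B g s assume a: "g \<in> carrier G" "sub2 G B M" "B \<subseteq> conjset G g K" "s \<in> gen_norms U M"
      have "(M, s \<otimes>\<^bsub>tT F M\<^esub> norm_res_conj M B g K y) \<in> prod_gens U V"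
        using a gen_normsI[OF Ky a(1-3)] unfolding prod_gens_def sub2_def by blast
      then show "s \<otimes>\<^bsub>tT F M\<^esub> norm_res_conj M B g K y \<in> Z M" unfolding Z_def by (rule tgen_mem)
    qed
  qed
  have UZ: "tsubseteq G (tgen G F U) (tcolon (tgen G F V) Z)"
    unfolding tsubseteq_def
  proof (intro allI impI tgen_least[OF tideal_tcolon[OF Z res_divisible_tideal[OF tideal_tgen[OF V]]]])
    fix H x assume Hx: "(H, x) \<in> U"
    show "x \<in> tcolon (tgen G F V) Z H"
    proof (rule tcolonI)
      show "x \<in> carrier (tT F H)" using U Hx by (auto simp: valid_gens_def)
      fix M B g q assume a: "g \<in> carrier G" "sub2 G B M" "B \<subseteq> conjset G g H" "q \<in> tgen G F V M"
      have M: "subgroup M G" using a(2) by (simp add: sub2_def)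
      have q: "q \<in> tcolon (gen_norms U) Z M" using VZ a(4) M by (auto simp: tsubseteq_def)
      have x: "norm_res_conj M B g H x \<in> gen_norms U M" using gen_normsI[OF Hx a(1-3)] .
      have "norm_res_conj M B g H x \<otimes>\<^bsub>tT F M\<^esub> q \<in> Z M" using tcolon_mult_mem[OF q M x] .
      then show "q \<otimes>\<^bsub>tT F M\<^esub> norm_res_conj M B g H x \<in> Z M"
        using cring.cring_simprules(14)[OF cring_level[OF M] tcolon_closed[OF q]
            res_divisible_closed[OF res_divisible_gen_norms[OF U] M x]] by simp
    qed
  qed
  show ?thesis
    unfolding tsubseteq_def Z_def[symmetric]
    using tprod_subset_of_subset_tcolon[OF Z tideal_tgen[OF V] UZ] by blast
qed

lemma trad_tgen_Int:
  assumes "valid_gens U" "valid_gens V" "subgroup H G"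
  shows "trad G F (tgen G F U) H \<inter> trad G F (tgen G F V) H = trad G F (tgen G F (prod_gens U V)) H"
  using trad_Int_eq[OF tideal_tgen tideal_tgen tgen_prod_gens_subset tprod_tgen_subset] assms by blast

end

theorem lemma6p3:
  fixes G :: "('g,'m) monoid_scheme" and F :: "('g,'a) tdata"
    and xs ys :: "('g set \<times> 'a) list"
  assumes "tambara G F"
    and "\<forall>(H, x) \<in> set xs. subgroup H G \<and> x \<in> carrier (tT F H)"
    and "\<forall>(H, y) \<in> set ys. subgroup H G \<and> y \<in> carrier (tT F H)"
  shows "\<exists>zs :: ('g set \<times> 'a) list.
           (\<forall>(H, z) \<in> set zs. subgroup H G \<and> z \<in> carrier (tT F H)) \<and>
           (\<forall>H. subgroup H G \<longrightarrow>
              trad G F (tgen G F (set xs)) H \<inter> trad G F (tgen G F (set ys)) H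
                = trad G F (tgen G F (set zs)) H)"
proof -
  interpret tambara_functor G F by (rule tambara_functor.intro) fact
  have gens: "valid_gens (set xs)" "valid_gens (set ys)"
    using assms(2,3) by (simp_all add: valid_gens_def)
  obtain zs where zs: "set zs = prod_gens (set xs) (set ys)"
    using finite_list[OF finite_prod_gens[OF List.finite_set List.finite_set]] by blast
  show ?thesis
    using valid_gens_prod_gens[OF gens] trad_tgen_Int[OF gens] unfolding zs[symmetric] valid_gens_def
    by (intro exI[of _ zs]) auto
qed

end
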